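(* Let $a\le A<B$, let $K$ be a covariance kernel on $[a,B]\times[a,B]$ and $f:[a,B]\to\mathbb{R}^m$, and consider the regression model $y(t)=\theta^Tf(t)+\epsilon(t)$ with zero-mean errors with covariance $K$, observed on $\mathcal{T}=[A,B]$. Let $\zeta_0$ be a signed $\mathbb{R}^m$-valued measure on $\mathcal{T}$ with $\int_A^BK(t,s)\zeta_0(dt)=f(s)$ for all $s\in\mathcal{T}$ and with $C=\int_{\mathcal{T}}f(t)\zeta_0^T(dt)$ non-degenerate, so that $\hat\theta_{G_0}=\int_{\mathcal{T}}y(t)G_0(dt)$ with $G_0=C^{-1}\zeta_0$ is a BLUE in this model. Define the integrated quantities $\tilde y(t)=\int_a^ty(u)du$, $\tilde f(t)=\int_a^tf(u)du$, $\tilde\epsilon(t)=\int_a^t\epsilon(u)du$, and consider the model $\tilde y(t)=\theta^T\tilde f(t)+\tilde\epsilon(t)$, whose error covariance is $R(t,s)=\int_a^t\int_a^sK(u,v)\,du\,dv$, observed together with $\tilde y^{(1)}=y$ on $\mathcal{T}$. Let $\eta_0,\eta_1$ be signed (scalar) measures on $\mathcal{T}$ with $$\int_{\mathcal{T}}R(t,s)\eta_0(dt)+\int_{\mathcal{T}}R^{(1)}(t,s)\eta_1(dt)=1\quad\text{for all }s\in\mathcal{T}.$$ Put $c=\int_a^A\big[\int_A^BK(t,s)\zeta_0(dt)-f(s)\big]ds\in\mathbb{R}^m$, $\tilde\zeta_0=-c\,\eta_0$, $\tilde\zeta_1=-c\,\eta_1+\zeta_0$, and $\tilde C=\int_{\mathcal{T}}\tilde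 f(t)\tilde\zeta_0^T(dt)+\int_{\mathcal{T}}\tilde f^{(1)}(t)\tilde\zeta_1^T(dt)$, assumed non-degenerate. Then the estimator $\int_{\mathcal{T}}\tilde y(t)\tilde G_0(dt)+\int_{\mathcal{T}}\tilde y^{(1)}(t)\tilde G_1(dt)$ with $\tilde G_i=\tilde C^{-1}\tilde\zeta_i$ $(i=0,1)$ is a BLUE in the model $\tilde y(t)=\theta^T\tilde f(t)+\tilde\epsilon(t)$ with covariance kernel $R$.
   Context: $R^{(1)}(t,s)=\partial R(t,s)/\partial t$. A BLUE in the integrated model is an unbiased estimator of the form $\int_{\mathcal{T}}\tilde y(t)H_0(dt)+\int_{\mathcal{T}}\tilde y^{(1)}(t)H_1(dt)$ ($H_0,H_1$ signed $\mathbb{R}^m$-valued measures) with minimal covariance matrix in Loewner order among such unbiased estimators; a BLUE in the original model is defined analogously using $y$ only. *)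

theory Defs
  imports "HOL-Analysis.Analysis"
begin

text \<open>Finite signed measures on an observation interval T are represented as finite
linear combinations of finite (nonnegative) Borel measures on T.  Every finite signed
measure (and every finite R^m-valued signed measure) is of this form (Jordan
decomposition); integrals only depend on the represented signed measure.\<close>

type_synonym smeas = "(real \<times> real measure) list"
type_synonym 'm vmeas = "((real, 'm) vec \<times> real measure) list"

definition admissible_meas :: "real set \<Rightarrow> real measure \<Rightarrow> bool" where
  "admissible_meas T M \<longleftrightarrow> finite_measure M \<and> space M = T \<and> sets M = sets (restrict_space borel T)"

definition smeas_on :: "real set \<Rightarrow> smeas \<Rightarrow> bool" where
  "smeas_on T S \<longleftrightarrow> (\<forall>p\<in>set S. admissible_meas T (snd p))"

definition vmeas_on :: "real set \<Rightarrow> ('m::finite) vmeas \<Rightarrow> bool" where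
  "vmeas_on T H \<longleftrightarrow> (\<forall>p\<in>set H. admissible_meas T (snd p))"

definition sint :: "smeas \<Rightarrow> (real \<Rightarrow> real) \<Rightarrow> real" where
  "sint S g = sum_list (map (\<lambda>(c, M). c * integral\<^sup>L M g) S)"

definition vint :: "('m::finite) vmeas \<Rightarrow> (real \<Rightarrow> real) \<Rightarrow> real^'m" where
  "vint H g = sum_list (map (\<lambda>(v, M). integral\<^sup>L M g *\<^sub>R v) H)"

text \<open>The matrix int F(t) G^T(dt), entry (i,j) = int F_i dG_j.\<close>
definition fmat :: "(real \<Rightarrow> real^'m) \<Rightarrow> ('m::finite) vmeas \<Rightarrow> real^'m^'m" where
  "fmat F G = (\<chi> i j. vint G (\<lambda>t. F t $ i) $ j)"

definition vscale :: "real^'m \<Rightarrow> smeas \<Rightarrow> ('m::finite) vmeas" where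
  "vscale c S = map (\<lambda>(r, M). (r *\<^sub>R c, M)) S"

definition mmul :: "real^'m^'m \<Rightarrow> ('m::finite) vmeas \<Rightarrow> 'm vmeas" where
  "mmul A G = map (\<lambda>(v, M). (A *v v, M)) G"

definition dint :: "(real \<Rightarrow> real \<Rightarrow> real) \<Rightarrow> ('m::finite) vmeas \<Rightarrow> 'm vmeas \<Rightarrow> real^'m^'m" where
  "dint k H H' = sum_list (map (\<lambda>(v, M). sum_list (map (\<lambda>(w, N).
      integral\<^sup>L M (\<lambda>t. integral\<^sup>L N (\<lambda>s. k t s)) *\<^sub>R (\<chi> i j. v $ i * w $ j)) H')) H)"

definition psd :: "real^'m^'m \<Rightarrow> bool" where
  "psd D \<longleftrightarrow> (\<forall>x::real^'m. 0 \<le> x \<bullet> (D *v x))"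

definition cov_kernel :: "real set \<Rightarrow> (real \<Rightarrow> real \<Rightarrow> real) \<Rightarrow> bool" where
  "cov_kernel S K \<longleftrightarrow> (\<forall>t\<in>S. \<forall>s\<in>S. K t s = K s t) \<and>
     (\<forall>n (x::nat \<Rightarrow> real) (c::nat \<Rightarrow> real). (\<forall>i<n. x i \<in> S) \<longrightarrow>
        0 \<le> (\<Sum>i<n. \<Sum>j<n. c i * c j * K (x i) (x j)))"

text \<open>Model observing a process z and its derivative z' on T, with regression functions
F0 (for z) and F1 (for z'), Cov(z(t),z(s)) = k00 t s, Cov(z'(t),z(s)) = k10 t s,
Cov(z'(t),z'(s)) = k11 t s.  Estimator: int z dH0 + int z' dH1.\<close>

definition unbiased2 :: "(real \<Rightarrow> real^'m) \<Rightarrow> (real \<Rightarrow> real^'m) \<Rightarrow> ('m::finite) vmeas \<Rightarrow> 'm vmeas \<Rightarrow> bool" where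
  "unbiased2 F0 F1 H0 H1 \<longleftrightarrow>
     (\<forall>\<theta>::real^'m. vint H0 (\<lambda>t. \<theta> \<bullet> F0 t) + vint H1 (\<lambda>t. \<theta> \<bullet> F1 t) = \<theta>)"

definition cov2 :: "(real \<Rightarrow> real \<Rightarrow> real) \<Rightarrow> (real \<Rightarrow> real \<Rightarrow> real) \<Rightarrow> (real \<Rightarrow> real \<Rightarrow> real)
     \<Rightarrow> ('m::finite) vmeas \<Rightarrow> 'm vmeas \<Rightarrow> real^'m^'m" where
  "cov2 k00 k10 k11 H0 H1 =
     dint k00 H0 H0 + dint (\<lambda>t s. k10 s t) H0 H1 + dint k10 H1 H0 + dint k11 H1 H1"

definition blue2 :: "real set \<Rightarrow> (real \<Rightarrow> real^'m) \<Rightarrow> (real \<Rightarrow> real^'m)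
     \<Rightarrow> (real \<Rightarrow> real \<Rightarrow> real) \<Rightarrow> (real \<Rightarrow> real \<Rightarrow> real) \<Rightarrow> (real \<Rightarrow> real \<Rightarrow> real)
     \<Rightarrow> ('m::finite) vmeas \<Rightarrow> 'm vmeas \<Rightarrow> bool" where
  "blue2 T F0 F1 k00 k10 k11 H0 H1 \<longleftrightarrow>
     vmeas_on T H0 \<and> vmeas_on T H1 \<and> unbiased2 F0 F1 H0 H1 \<and>
     (\<forall>H0' H1'. vmeas_on T H0' \<and> vmeas_on T H1' \<and> unbiased2 F0 F1 H0' H1' \<longrightarrow>
        psd (cov2 k00 k10 k11 H0' H1' - cov2 k00 k10 k11 H0 H1))"

end

theory Submission
  imports Defs
begin

(*
  Fix a direction x.  Projecting the vector measures on x turns the covariance matrix of an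
  estimator  int y~ dH0 + int y dH1  into a quadratic form Q of pairs (S0, S1) of scalar signed
  measures, with kernels R, R^(1) and K.  The hypotheses on zeta0 and eta, together with the choice
  of c, make the proposed measures reproducing: Q pairs (zeta~0, zeta~1) projected on theta with any
  (S0, S1) to  int theta.f~ dS0 + int theta.f dS1;  the identity for R^(1) is the derivative of the
  eta equation.  Hence the proposed estimator is unbiased and every unbiased estimator has the same
  cross covariance with it, so the difference of the covariance matrices is the quadratic form of
  the difference of the estimators.  This is nonnegative since Q inherits positivity from K, which
  is approximated uniformly by the finite-rank kernels  sum K(x_i, x_j) phi_i(u) phi_j(v)  of a
  partition of unity.
*)

section \<open>Linear algebra of signed measures\<close>

definition proj_vmeas :: "real^'m \<Rightarrow> ('m::finite) vmeas \<Rightarrow> smeas" where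
  "proj_vmeas x H = map (\<lambda>(v, M). (x \<bullet> v, M)) H"

definition neg_smeas :: "smeas \<Rightarrow> smeas" where
  "neg_smeas S = map (\<lambda>(r, M). (- r, M)) S"

definition sdint :: "(real \<Rightarrow> real \<Rightarrow> real) \<Rightarrow> smeas \<Rightarrow> smeas \<Rightarrow> real" where
  "sdint k S S' = sum_list (map (\<lambda>(r, M). sum_list (map (\<lambda>(q, N).
      r * q * (\<integral>t. (\<integral>s. k t s \<partial>N) \<partial>M)) S')) S)"

lemma inner_sum_list_matrix_vector:
  "(x::real^'m::finite) \<bullet> (sum_list (map f xs) *v y) = sum_list (map (\<lambda>z. x \<bullet> (f z *v y)) xs)"
  by (induction xs) (simp_all add: matrix_vector_mult_add_rdistrib inner_add_right)

lemma inner_outer_product_matrix_vector: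
  "(x::real^'m::finite) \<bullet> ((c *\<^sub>R (\<chi> i j. v $ i * w $ j)) *v y) = c * (x \<bullet> v) * (y \<bullet> w)"
  by (simp add: matrix_vector_mult_def inner_vec_def sum_distrib_left sum_distrib_right
      mult_ac sum_product)

lemma inner_dint:
  "(x::real^'m::finite) \<bullet> (dint k H H' *v y) = sdint k (proj_vmeas x H) (proj_vmeas y H')"
  unfolding dint_def sdint_def proj_vmeas_def
  by (simp add: inner_sum_list_matrix_vector inner_outer_product_matrix_vector case_prod_beta
      o_def mult_ac)

lemma inner_vint: "(x::real^'m::finite) \<bullet> vint H g = sint (proj_vmeas x H) g"
  unfolding vint_def sint_def proj_vmeas_def
  by (induction H) (auto simp: inner_add_right mult_ac)

lemma proj_vmeas_mmul: "proj_vmeas x (mmul A H) = proj_vmeas (x v* A) (H::('m::finite) vmeas)"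
  by (simp add: proj_vmeas_def mmul_def case_prod_beta o_def dot_lmul_matrix)

lemma vint_append: "vint (H @ H') g = vint H g + vint H' g"
  by (simp add: vint_def)

lemma vint_vscale: "vint (vscale c S) g = sint S g *\<^sub>R c"
  unfolding vint_def vscale_def sint_def
  by (induction S) (auto simp: scaleR_add_left)

lemma sint_mult: "sint S (\<lambda>t. c * g t) = c * sint S g"
  unfolding sint_def by (induction S) (auto simp: algebra_simps)

lemma sdint_append_left: "sdint k (S @ S') T = sdint k S T + sdint k S' T"
  by (simp add: sdint_def)

lemma sdint_append_right: "sdint k S (T @ T') = sdint k S T + sdint k S T'"
  unfolding sdint_def by (induction S) (auto simp: algebra_simps)

lemma sdint_neg_left: "sdint k (neg_smeas S) T = - sdint k S T"
proof -
  have "\<And>r X. sum_list (map (\<lambda>(q, N). (- r) * q * X N) T) = - sum_list (map (\<lambda>(q, N). r * q * X N) T)"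
    by (induction T) auto
  then show ?thesis unfolding sdint_def neg_smeas_def by (induction S) auto
qed

lemma sdint_neg_right: "sdint k S (neg_smeas T) = - sdint k S T"
proof -
  have "\<And>r X. sum_list (map (\<lambda>(q, N). r * q * X N) (neg_smeas T))
      = - sum_list (map (\<lambda>(q, N). r * q * X N) T)"
    unfolding neg_smeas_def by (induction T) auto
  then show ?thesis unfolding sdint_def by (induction S) auto
qed

lemma smeas_on_proj_vmeas: "vmeas_on T H \<Longrightarrow> smeas_on T (proj_vmeas x H)"
  by (auto simp: vmeas_on_def smeas_on_def proj_vmeas_def)

lemma smeas_on_neg_smeas: "smeas_on T S \<Longrightarrow> smeas_on T (neg_smeas S)"
  by (auto simp: smeas_on_def neg_smeas_def)

lemma smeas_on_append: "smeas_on T S \<Longrightarrow> smeas_on T S' \<Longrightarrow> smeas_on T (S @ S')"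
  by (auto simp: smeas_on_def)

lemma vmeas_on_mmul: "vmeas_on T H \<Longrightarrow> vmeas_on T (mmul A H)"
  by (auto simp: vmeas_on_def mmul_def)

lemma vmeas_on_vscale: "smeas_on T S \<Longrightarrow> vmeas_on T (vscale c S)"
  by (auto simp: vmeas_on_def smeas_on_def vscale_def)

lemma vmeas_on_append: "vmeas_on T H \<Longrightarrow> vmeas_on T H' \<Longrightarrow> vmeas_on T (H @ H')"
  by (auto simp: vmeas_on_def)

lemma smeas_on_admissible: "smeas_on T S \<Longrightarrow> (r, M) \<in> set S \<Longrightarrow> admissible_meas T M"
  by (force simp: smeas_on_def)

lemma vmeas_on_admissible: "vmeas_on T H \<Longrightarrow> (v, M) \<in> set H \<Longrightarrow> admissible_meas T M"
  by (force simp: vmeas_on_def)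

lemma admissible_measD:
  assumes "admissible_meas T M"
  shows "finite_measure M" "space M = T" "sets M = sets (restrict_space borel T)"
  using assms by (auto simp: admissible_meas_def)

lemma admissible_meas_measurable:
  assumes "admissible_meas T M" "continuous_on T g"
  shows "g \<in> borel_measurable M"
  using borel_measurable_continuous_on_restrict[OF assms(2)]
    measurable_cong_sets[OF admissible_measD(3)[OF assms(1)] refl] by blast

lemma admissible_meas_integrable:
  assumes "admissible_meas T M" "compact T" "continuous_on T g"
  shows "integrable M (g :: _ \<Rightarrow> real)"
proof -
  interpret finite_measure M using admissible_measD[OF assms(1)] by simp
  obtain C where C: "\<And>x. x \<in> T \<Longrightarrow> norm (g x) \<le> C"
    using compact_imp_bounded[OF compact_continuous_image[OF assms(3,2)]] bounded_iff
    by (metis image_eqI)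
  show ?thesis
    by (rule integrable_const_bound[where B=C])
       (use C admissible_measD[OF assms(1)] admissible_meas_measurable[OF assms(1,3)] in auto)
qed

lemma admissible_meas_integral_bound:
  assumes "admissible_meas T M" "\<And>t. t \<in> T \<Longrightarrow> \<bar>g t\<bar> \<le> C"
  shows "\<bar>integral\<^sup>L M (g :: _ \<Rightarrow> real)\<bar> \<le> C * measure M T"
proof -
  interpret finite_measure M using admissible_measD[OF assms(1)] by simp
  have space: "space M = T" using admissible_measD[OF assms(1)] by simp
  have nonneg: "0 \<le> C * measure M T"
  proof (cases "T = {}")
    case False
    then obtain t where "t \<in> T" by auto
    then show ?thesis using assms(2)[of t] by simp
  qed simp
  show ?thesis
  proof (cases "integrable M g")
    case True
    have "\<bar>integral\<^sup>L M g\<bar> \<le> integral\<^sup>L M (\<lambda>x. \<bar>g x\<bar>)" by (rule integral_abs_bound)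
    also have "\<dots> \<le> integral\<^sup>L M (\<lambda>x. C)"
      using True assms(2) space by (intro integral_mono) auto
    finally show ?thesis using space by (simp add: mult.commute)
  qed (use nonneg in \<open>simp add: not_integrable_integral_eq\<close>)
qed

lemma continuous_on_swap_args:
  assumes "continuous_on (U \<times> V) (\<lambda>(x, y). f x y)"
  shows "continuous_on (V \<times> U) (\<lambda>(y, x). f x y)"
proof -
  have "continuous_on (V \<times> U) (\<lambda>z. (\<lambda>(x, y). f x y) ((\<lambda>z. (snd z, fst z)) z))"
    by (rule continuous_on_compose2[OF assms]) (auto intro!: continuous_intros)
  then show ?thesis by (simp add: case_prod_beta)
qed

lemma continuous_on_slice:
  assumes "continuous_on (U \<times> V) (\<lambda>(x, y). f x y)" "x \<in> U"
  shows "continuous_on V (f x)"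
proof -
  have "continuous_on V (\<lambda>y. (\<lambda>(x, y). f x y) ((\<lambda>y. (x, y)) y))"
    by (rule continuous_on_compose2[OF assms(1)]) (use assms(2) in \<open>auto intro!: continuous_intros\<close>)
  then show ?thesis by simp
qed

lemma continuous_on_integral_admissible_param:
  assumes "admissible_meas T N" "compact T"
    and cont: "continuous_on (U \<times> T) (\<lambda>(x, t). k x t)"
  shows "continuous_on U (\<lambda>x. integral\<^sup>L N (k x) :: real)"
  unfolding continuous_on_def
proof (intro strip tendstoI)
  fix e' :: real and x
  assume "e' > 0" "x \<in> U"
  define e where "e = e' / (measure N T + 1)"
  have "e > 0" unfolding e_def using \<open>e' > 0\<close> by (simp add: add_nonneg_pos)
  from continuous_on_prod_compactE[OF cont assms(2) \<open>x \<in> U\<close> this]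
  obtain X0 where X0: "x \<in> X0" "open X0"
    and close: "\<forall>y\<in>X0 \<inter> U. \<forall>t \<in> T. dist (k y t) (k x t) \<le> e"
    by auto
  have "\<forall>\<^sub>F y in at x within U. y \<in> X0 \<inter> U"
    using X0 eventually_at_topological by auto
  then show "\<forall>\<^sub>F y in at x within U. dist (integral\<^sup>L N (k y)) (integral\<^sup>L N (k x)) < e'"
  proof eventually_elim
    case (elim y)
    have "dist (integral\<^sup>L N (k y)) (integral\<^sup>L N (k x)) = \<bar>integral\<^sup>L N (\<lambda>t. k y t - k x t)\<bar>"
      using elim \<open>x \<in> U\<close>
      by (simp add: dist_real_def admissible_meas_integrable[OF assms(1,2)]
          continuous_on_slice[OF cont])
    also have "\<dots> \<le> e * measure N T"
      by (rule admissible_meas_integral_bound[OF assms(1)])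
         (use close elim in \<open>auto simp: dist_real_def\<close>)
    also have "\<dots> < e * (measure N T + 1)"
      using \<open>e > 0\<close> by simp
    also have "\<dots> = e'"
      unfolding e_def by (simp add: add_nonneg_pos less_imp_neq[symmetric])
    finally show ?case .
  qed
qed

lemma admissible_meas_Fubini:
  fixes k :: "real \<Rightarrow> real \<Rightarrow> real"
  assumes M: "admissible_meas T M" and N: "admissible_meas T' N"
    and "compact T" "compact T'"
    and cont: "continuous_on (T \<times> T') (\<lambda>(t, s). k t s)"
  shows "(\<integral>t. (\<integral>s. k t s \<partial>N) \<partial>M) = (\<integral>s. (\<integral>t. k t s \<partial>M) \<partial>N)"
proof -
  interpret M: finite_measure M using admissible_measD[OF M] by simp
  interpret N: finite_measure N using admissible_measD[OF N] by simp
  interpret P: pair_sigma_finite M N ..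
  interpret PM: finite_measure "M \<Otimes>\<^sub>M N"
    by (rule finite_measure_pair_measure) (use admissible_measD[OF M] admissible_measD[OF N] in auto)
  have "(\<lambda>z. (fst z, snd z)) \<in> measurable (M \<Otimes>\<^sub>M N) (borel \<Otimes>\<^sub>M borel)"
    using admissible_meas_measurable[OF M continuous_on_id]
      admissible_meas_measurable[OF N continuous_on_id]
    by measurable
  then have "(\<lambda>z. z) \<in> measurable (M \<Otimes>\<^sub>M N) (restrict_space borel (T \<times> T'))"
    by (intro measurable_restrict_space2)
       (use admissible_measD(2)[OF M] admissible_measD(2)[OF N]
         in \<open>auto simp: borel_prod space_pair_measure\<close>)
  from measurable_comp[OF this borel_measurable_continuous_on_restrict[OF cont]]
  have meas: "(\<lambda>(t, s). k t s) \<in> borel_measurable (M \<Otimes>\<^sub>M N)"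
    by (simp add: comp_def)
  obtain C where C: "\<And>z. z \<in> T \<times> T' \<Longrightarrow> norm ((\<lambda>(t, s). k t s) z) \<le> C"
    using compact_imp_bounded[OF compact_continuous_image[OF cont compact_Times[OF assms(3,4)]]]
      bounded_iff
    by (metis image_eqI)
  have "AE z in M \<Otimes>\<^sub>M N. norm ((\<lambda>(t, s). k t s) z) \<le> C"
    using C admissible_measD(2)[OF M] admissible_measD(2)[OF N] by (auto simp: space_pair_measure)
  from P.Fubini_integral[OF PM.integrable_const_bound[OF this meas]] show ?thesis by simp
qed

lemma integral_restrict_lborel_Icc:
  assumes "continuous_on {p..q} g"
  shows "integral\<^sup>L (restrict_space lborel {p..q}) g = integral {p..q} (g :: real \<Rightarrow> real)"
proof -
  have "integral\<^sup>L (restrict_space lborel {p..q}) g = set_lebesgue_integral lborel {p..q} g"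
    by (simp add: integral_restrict_space set_lebesgue_integral_def)
  also have "\<dots> = integral {p..q} g"
    using borel_integrable_compact[OF compact_Icc assms]
    by (intro set_borel_integral_eq_integral(2)) (simp add: set_integrable_def)
  finally show ?thesis .
qed

lemma admissible_meas_restrict_lborel: "admissible_meas {p..q} (restrict_space lborel {p..q})"
  unfolding admissible_meas_def
proof (intro conjI)
  show "sets (restrict_space lborel {p..q}) = sets (restrict_space borel {p..q})"
    by (rule sets_restrict_space_cong) simp
  show "finite_measure (restrict_space lborel {p..q})"
    by (rule finite_measureI) (cases "p \<le> q"; simp add: emeasure_restrict_space)
qed simp

lemma admissible_meas_interval_Fubini:
  fixes k :: "real \<Rightarrow> real \<Rightarrow> real"
  assumes M: "admissible_meas T M" and "compact T"
    and cont: "continuous_on (T \<times> {p..q}) (\<lambda>(t, v). k t v)"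
  shows "(\<integral>t. integral {p..q} (k t) \<partial>M) = integral {p..q} (\<lambda>v. \<integral>t. k t v \<partial>M)"
proof -
  let ?N = "restrict_space lborel {p..q}"
  have "(\<integral>t. integral {p..q} (k t) \<partial>M) = (\<integral>t. (\<integral>v. k t v \<partial>?N) \<partial>M)"
    using admissible_measD(2)[OF M]
    by (intro Bochner_Integration.integral_cong)
       (auto simp: integral_restrict_lborel_Icc[OF continuous_on_slice[OF cont]])
  also have "\<dots> = (\<integral>v. (\<integral>t. k t v \<partial>M) \<partial>?N)"
    by (rule admissible_meas_Fubini[OF M admissible_meas_restrict_lborel \<open>compact T\<close>
        compact_Icc cont])
  also have "\<dots> = integral {p..q} (\<lambda>v. \<integral>t. k t v \<partial>M)"
    by (intro integral_restrict_lborel_Icc continuous_on_integral_admissible_param[OF M \<open>compact T\<close>]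
        continuous_on_swap_args[OF cont])
  finally show ?thesis .
qed

section \<open>Integrated kernels\<close>

lemma integral_Icc_rescale:
  fixes g :: "real \<Rightarrow> real"
  assumes "a < s" and "g integrable_on {a..s}"
  shows "integral {a..s} g = (s - a) * integral {0..1} (\<lambda>r. g ((s - a) * r + a))"
proof -
  have "(g has_integral integral {a..s} g) (cbox a s)"
    unfolding cbox_interval by (rule integrable_integral[OF assms(2)])
  from has_integral_affinity'[OF this, of "s - a" a] assms(1)
  have "((\<lambda>r. g ((s - a) * r + a)) has_integral (integral {a..s} g / (s - a))) {0..1}"
    by (simp add: divide_inverse mult.commute)
  then show ?thesis using assms(1) by (simp add: integral_unique)
qed

text \<open>Rescaling [a, s] to [0, 1] turns this into a parameter integral over a fixed interval.\<close>

lemma continuous_on_integral_upper_param: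
  fixes g :: "'a::topological_space \<Rightarrow> real \<Rightarrow> real"
  assumes cont: "continuous_on (U \<times> {a..b}) (\<lambda>(x, v). g x v)"
  shows "continuous_on (U \<times> {a..b}) (\<lambda>(x, s). integral {a..s} (g x))"
proof -
  have mem: "(s - a) * r + a \<in> {a..b}" if "s \<in> {a..b}" "r \<in> {0..1}" for s r :: real
  proof -
    have "(s - a) * r \<le> (s - a) * 1" using that by (intro mult_left_mono) auto
    then show ?thesis using that by auto
  qed
  have "(\<lambda>z. (fst (fst z), (snd (fst z) - a) * snd z + a)) ` ((U \<times> {a..b}) \<times> cbox 0 1) \<subseteq> U \<times> {a..b}"
    using mem by force
  from continuous_on_compose2[OF cont _ this]
  have "continuous_on ((U \<times> {a..b}) \<times> cbox 0 1)
      (\<lambda>z. (\<lambda>(x, v). g x v) ((\<lambda>z. (fst (fst z), (snd (fst z) - a) * snd z + a)) z))"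
    by (simp add: continuous_intros)
  then have "continuous_on (U \<times> {a..b})
      (\<lambda>xs. integral (cbox 0 1) (\<lambda>r. g (fst xs) ((snd xs - a) * r + a)))"
    using integral_continuous_on_param[of "U \<times> {a..b}" 0 1 "\<lambda>xs r. g (fst xs) ((snd xs - a) * r + a)"]
    by (simp add: case_prod_beta)
  then have "continuous_on (U \<times> {a..b})
      (\<lambda>xs. (snd xs - a) * integral {0..1} (\<lambda>r. g (fst xs) ((snd xs - a) * r + a)))"
    by (auto intro!: continuous_intros)
  then show ?thesis
  proof (rule continuous_on_eq)
    fix xs assume xs: "xs \<in> U \<times> {a..b}"
    show "(snd xs - a) * integral {0..1} (\<lambda>r. g (fst xs) ((snd xs - a) * r + a)) =
        (\<lambda>(x, s). integral {a..s} (g x)) xs"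
    proof (cases "snd xs = a")
      case False
      with xs have "a < snd xs" by auto
      moreover have "g (fst xs) integrable_on {a..snd xs}"
        using xs by (intro integrable_continuous_interval
            continuous_on_subset[OF continuous_on_slice[OF cont]])
          auto
      ultimately show ?thesis by (simp add: case_prod_beta integral_Icc_rescale)
    qed (simp add: case_prod_beta)
  qed
qed

lemma integral_Icc_abs_bound:
  fixes g :: "real \<Rightarrow> real"
  assumes "p \<le> q" "\<And>v. v \<in> {p..q} \<Longrightarrow> \<bar>g v\<bar> \<le> C"
  shows "\<bar>integral {p..q} g\<bar> \<le> C * (q - p)"
proof -
  have C: "0 \<le> C" using assms(2)[of p] assms(1) by auto
  show ?thesis
  proof (cases "g integrable_on {p..q}")
    case True
    then show ?thesis using integrable_bound[OF C, of g p q] assms by auto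
  qed (use C assms(1) in \<open>simp add: not_integrable_integral\<close>)
qed

lemma integral_correct_initial_segment:
  fixes \<phi> f :: "real \<Rightarrow> 'a::banach"
  assumes "a \<le> A" "A \<le> t" and \<phi>: "\<phi> integrable_on {a..t}" and f: "f integrable_on {a..t}"
    and eq: "\<And>v. v \<in> {A..t} \<Longrightarrow> \<phi> v = f v"
  shows "integral {a..t} \<phi> - integral {a..A} (\<lambda>s. \<phi> s - f s) = integral {a..t} f"
proof -
  have "integral {a..A} (\<lambda>s. \<phi> s - f s) = integral {a..A} \<phi> - integral {a..A} f"
    using assms
    by (intro integral_diff integrable_on_subinterval[OF \<phi>] integrable_on_subinterval[OF f]) auto
  moreover have "integral {A..t} \<phi> = integral {A..t} f"
    by (rule integral_cong) (rule eq)
  then have "integral {a..t} \<phi> = integral {a..A} \<phi> + integral {A..t} f"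
    using Henstock_Kurzweil_Integration.integral_combine[OF assms(1,2) \<phi>] by simp
  moreover have "integral {a..t} f = integral {a..A} f + integral {A..t} f"
    using Henstock_Kurzweil_Integration.integral_combine[OF assms(1,2) f] by simp
  ultimately show ?thesis by (simp add: algebra_simps)
qed

lemma continuous_zero_if_integrals_vanish:
  fixes g :: "real \<Rightarrow> real"
  assumes "A < B" and cont: "continuous_on {A..B} g"
    and vanish: "\<And>u. u \<in> {A..B} \<Longrightarrow> integral {A..u} g = 0" and t: "t \<in> {A..B}"
  shows "g t = 0"
proof -
  have "((\<lambda>u. integral {A..u} g) has_vector_derivative g t) (at t within {A..B})"
    by (rule integral_has_vector_derivative[OF cont t])
  from has_vector_derivative_transform[OF t _ this]
  have "((\<lambda>u. 0) has_vector_derivative g t) (at t within {A..B})"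
    by (simp add: vanish)
  from vector_derivative_unique_within_closed_interval[OF \<open>A < B\<close>, unfolded cbox_interval, OF t this]
  show ?thesis by (simp add: has_vector_derivative_const)
qed

definition integrated_kernel :: "real \<Rightarrow> (real \<Rightarrow> real \<Rightarrow> real) \<Rightarrow> real \<Rightarrow> real \<Rightarrow> real" where
  "integrated_kernel a k t s = integral {a..t} (\<lambda>u. integral {a..s} (\<lambda>v. k u v))"

definition integrated_kernel_dt :: "real \<Rightarrow> (real \<Rightarrow> real \<Rightarrow> real) \<Rightarrow> real \<Rightarrow> real \<Rightarrow> real" where
  "integrated_kernel_dt a k t s = integral {a..s} (\<lambda>v. k t v)"

lemma integrated_kernel_eq_integral_dt:
  "integrated_kernel a k t s = integral {a..t} (\<lambda>u. integrated_kernel_dt a k u s)"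
  by (simp add: integrated_kernel_def integrated_kernel_dt_def)

lemma integrated_kernel_dt_continuous:
  assumes "continuous_on ({a..b} \<times> {a..b}) (\<lambda>(u, v). k u v)"
  shows "continuous_on ({a..b} \<times> {a..b}) (\<lambda>(t, s). integrated_kernel_dt a k t s)"
  using continuous_on_integral_upper_param[OF assms] by (simp add: integrated_kernel_dt_def)

lemma integrated_kernel_continuous:
  assumes "continuous_on ({a..b} \<times> {a..b}) (\<lambda>(u, v). k u v)"
  shows "continuous_on ({a..b} \<times> {a..b}) (\<lambda>(t, s). integrated_kernel a k t s)"
proof -
  have "continuous_on ({a..b} \<times> {a..b}) (\<lambda>(s, u). integrated_kernel_dt a k u s)"
    by (rule continuous_on_swap_args[OF integrated_kernel_dt_continuous[OF assms]])
  from continuous_on_swap_args[OF continuous_on_integral_upper_param[OF this]] show ?thesis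
    by (simp add: integrated_kernel_eq_integral_dt)
qed

lemma integrated_kernel_dt_add:
  assumes "continuous_on ({a..b} \<times> {a..b}) (\<lambda>(u, v). k1 u v)"
    and "continuous_on ({a..b} \<times> {a..b}) (\<lambda>(u, v). k2 u v)"
    and "t \<in> {a..b}" "s \<in> {a..b}"
  shows "integrated_kernel_dt a (\<lambda>u v. k1 u v + k2 u v) t s
       = integrated_kernel_dt a k1 t s + integrated_kernel_dt a k2 t s"
proof -
  have "k t integrable_on {a..s}" if "continuous_on ({a..b} \<times> {a..b}) (\<lambda>(u, v). k u v)"
    for k :: "real \<Rightarrow> real \<Rightarrow> real"
    using continuous_on_subset[OF continuous_on_slice[OF that assms(3)], of "{a..s}"] assms(4)
    by (auto intro: integrable_continuous_interval)
  then show ?thesis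
    unfolding integrated_kernel_dt_def using assms(1,2) by (simp add: integral_add)
qed

lemma integrated_kernel_add:
  assumes k1: "continuous_on ({a..b} \<times> {a..b}) (\<lambda>(u, v). k1 u v)"
    and k2: "continuous_on ({a..b} \<times> {a..b}) (\<lambda>(u, v). k2 u v)"
    and "t \<in> {a..b}" "s \<in> {a..b}"
  shows "integrated_kernel a (\<lambda>u v. k1 u v + k2 u v) t s
       = integrated_kernel a k1 t s + integrated_kernel a k2 t s"
proof -
  have int: "(\<lambda>u. integrated_kernel_dt a k u s) integrable_on {a..t}"
    if "continuous_on ({a..b} \<times> {a..b}) (\<lambda>(u, v). k u v)" for k :: "real \<Rightarrow> real \<Rightarrow> real"
  proof -
    have "continuous_on {a..b} (\<lambda>u. integrated_kernel_dt a k u s)"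
      using continuous_on_slice[OF continuous_on_swap_args[OF integrated_kernel_dt_continuous[OF that]]]
        assms
      by simp
    then show ?thesis
      by (rule integrable_continuous_interval[OF continuous_on_subset]) (use assms in auto)
  qed
  have "integrated_kernel a (\<lambda>u v. k1 u v + k2 u v) t s
      = integral {a..t} (\<lambda>u. integrated_kernel_dt a k1 u s + integrated_kernel_dt a k2 u s)"
    unfolding integrated_kernel_eq_integral_dt
    by (rule integral_cong) (use assms in \<open>auto intro!: integrated_kernel_dt_add[OF k1 k2]\<close>)
  then show ?thesis
    by (simp add: integrated_kernel_eq_integral_dt integral_add[OF int[OF k1] int[OF k2]])
qed

lemma integrated_kernel_dt_bound:
  assumes "\<And>u v. u \<in> {a..b} \<Longrightarrow> v \<in> {a..b} \<Longrightarrow> \<bar>k u v\<bar> \<le> e"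
    and "t \<in> {a..b}" "s \<in> {a..b}"
  shows "\<bar>integrated_kernel_dt a k t s\<bar> \<le> e * (b - a)"
proof -
  have e: "0 \<le> e" using assms(1)[of t t] assms(2) by auto
  have "\<bar>integrated_kernel_dt a k t s\<bar> \<le> e * (s - a)"
    unfolding integrated_kernel_dt_def by (rule integral_Icc_abs_bound) (use assms in auto)
  also have "\<dots> \<le> e * (b - a)" using e assms by (intro mult_left_mono) auto
  finally show ?thesis .
qed

lemma integrated_kernel_bound:
  assumes "\<And>u v. u \<in> {a..b} \<Longrightarrow> v \<in> {a..b} \<Longrightarrow> \<bar>k u v\<bar> \<le> e"
    and "t \<in> {a..b}" "s \<in> {a..b}"
  shows "\<bar>integrated_kernel a k t s\<bar> \<le> e * (b - a) * (b - a)"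
proof -
  have e: "0 \<le> e" using assms(1)[of t t] assms(2) by auto
  have "\<bar>integrated_kernel a k t s\<bar> \<le> e * (b - a) * (t - a)"
    unfolding integrated_kernel_eq_integral_dt
    by (rule integral_Icc_abs_bound) (use assms in \<open>auto intro!: integrated_kernel_dt_bound\<close>)
  also have "\<dots> \<le> e * (b - a) * (b - a)" using e assms by (intro mult_left_mono) auto
  finally show ?thesis .
qed

lemma integrated_kernel_swap_integrals:
  assumes sym: "\<And>u v. u \<in> {a..b} \<Longrightarrow> v \<in> {a..b} \<Longrightarrow> k u v = k v u"
    and cont: "continuous_on ({a..b} \<times> {a..b}) (\<lambda>(u, v). k u v)"
    and "t \<in> {a..b}" "s \<in> {a..b}"
  shows "integrated_kernel a k t s = integral {a..s} (\<lambda>v. integrated_kernel_dt a k v t)"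
proof -
  have "continuous_on (cbox (a, a) (t, s)) (\<lambda>(u, v). k u v)"
    by (rule continuous_on_subset[OF cont]) (use assms in \<open>auto simp: cbox_Pair_eq\<close>)
  then have "integral (cbox a t) (\<lambda>u. integral (cbox a s) (k u))
      = integral (cbox a s) (\<lambda>v. integral (cbox a t) (\<lambda>u. k u v))"
    by (rule integral_swap_continuous)
  also have "\<dots> = integral {a..s} (\<lambda>v. integrated_kernel_dt a k v t)"
    unfolding integrated_kernel_dt_def cbox_interval
    by (rule integral_cong, rule integral_cong) (use assms in auto)
  finally show ?thesis by (simp add: integrated_kernel_def)
qed

lemma integrated_kernel_sym:
  assumes "\<And>u v. u \<in> {a..b} \<Longrightarrow> v \<in> {a..b} \<Longrightarrow> k u v = k v u"
    and "continuous_on ({a..b} \<times> {a..b}) (\<lambda>(u, v). k u v)"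
    and "t \<in> {a..b}" "s \<in> {a..b}"
  shows "integrated_kernel a k t s = integrated_kernel a k s t"
  using integrated_kernel_swap_integrals[OF assms]
  by (simp add: integrated_kernel_def integrated_kernel_dt_def)

section \<open>Integration against signed measures\<close>

lemma lebesgue_integral_sum_list:
  assumes "\<And>x. x \<in> set xs \<Longrightarrow> integrable M (f x)"
  shows "integral\<^sup>L M (\<lambda>t. sum_list (map (\<lambda>x. f x t) xs) :: real)
       = sum_list (map (\<lambda>x. integral\<^sup>L M (f x)) xs)"
proof -
  have "integrable M (\<lambda>t. sum_list (map (\<lambda>x. f x t) xs)) \<and>
      integral\<^sup>L M (\<lambda>t. sum_list (map (\<lambda>x. f x t) xs)) = sum_list (map (\<lambda>x. integral\<^sup>L M (f x)) xs)"
    using assms by (induction xs) auto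
  then show ?thesis ..
qed

lemma integral_sum_list:
  assumes "\<And>x. x \<in> set xs \<Longrightarrow> f x integrable_on S"
  shows "integral S (\<lambda>t. sum_list (map (\<lambda>x. f x t) xs) :: 'a::banach)
       = sum_list (map (\<lambda>x. integral S (f x)) xs)"
proof -
  have "(\<lambda>t. sum_list (map (\<lambda>x. f x t) xs)) integrable_on S \<and>
      integral S (\<lambda>t. sum_list (map (\<lambda>x. f x t) xs)) = sum_list (map (\<lambda>x. integral S (f x)) xs)"
    using assms by (induction xs) (auto intro: integrable_add integrable_0 simp: integral_add)
  then show ?thesis ..
qed

lemma sum_list_map_swap:
  "sum_list (map (\<lambda>x. sum_list (map (\<lambda>y. f x y) ys)) xs) =
   (sum_list (map (\<lambda>y. sum_list (map (\<lambda>x. f x y) xs)) ys) :: real)"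
  by (induction xs) (auto simp: sum_list_addf)

lemma sum_list_map_sum_swap:
  "sum_list (map (\<lambda>x. \<Sum>i\<in>I. f x i) xs) = (\<Sum>i\<in>I. sum_list (map (\<lambda>x. f x i) xs) :: real)"
  by (induction xs) (auto simp: sum.distrib)

lemma sum_list_map_product:
  "sum_list (map (\<lambda>x. sum_list (map (\<lambda>y. f x * g y * e) ys)) xs)
     = sum_list (map f xs) * sum_list (map g ys) * (e::real)"
proof -
  have "sum_list (map (\<lambda>y. c * g y * e) ys) = c * sum_list (map g ys) * e" for c
    by (induction ys) (simp_all add: algebra_simps)
  then show ?thesis by (induction xs) (simp_all add: ring_distribs)
qed

lemma sint_cong:
  assumes "smeas_on T S" and "\<And>t. t \<in> T \<Longrightarrow> f t = g t"
  shows "sint S f = sint S g"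
proof -
  have "\<And>r M. (r, M) \<in> set S \<Longrightarrow> integral\<^sup>L M f = integral\<^sup>L M g"
    using assms admissible_measD(2)[OF smeas_on_admissible[OF assms(1)]]
    by (intro Bochner_Integration.integral_cong) auto
  then show ?thesis unfolding sint_def by (intro arg_cong[where f=sum_list] map_cong) auto
qed

lemma vint_cong:
  assumes "vmeas_on T H" and "\<And>t. t \<in> T \<Longrightarrow> f t = g t"
  shows "vint H f = vint H g"
proof -
  have "\<And>v M. (v, M) \<in> set H \<Longrightarrow> integral\<^sup>L M f = integral\<^sup>L M g"
    using assms admissible_measD(2)[OF vmeas_on_admissible[OF assms(1)]]
    by (intro Bochner_Integration.integral_cong) auto
  then show ?thesis unfolding vint_def by (intro arg_cong[where f=sum_list] map_cong) auto
qed

definition smeas_mass :: "real set \<Rightarrow> smeas \<Rightarrow> real" where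
  "smeas_mass T S = sum_list (map (\<lambda>(r, M). \<bar>r\<bar> * measure M T) S)"

context
  fixes T :: "real set"
  assumes compact_T: "compact T"
begin

lemma continuous_on_sint_param:
  assumes S: "smeas_on T S" and cont: "continuous_on (U \<times> T) (\<lambda>(x, t). k x t)"
  shows "continuous_on U (\<lambda>x. sint S (k x))"
  using S unfolding sint_def
proof (induction S)
  case (Cons p S)
  obtain r M where p: "p = (r, M)" by fastforce
  have "continuous_on U (\<lambda>x. integral\<^sup>L M (k x))"
    using Cons.prems p
    by (intro continuous_on_integral_admissible_param[OF _ compact_T cont]) (auto simp: smeas_on_def)
  moreover have "smeas_on T S" using Cons.prems by (auto simp: smeas_on_def)
  ultimately show ?case using Cons.IH p by (auto intro!: continuous_intros)
qed simp

lemma continuous_on_vint_param: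
  assumes H: "vmeas_on T H" and cont: "continuous_on (U \<times> T) (\<lambda>(x, t). k x t)"
  shows "continuous_on U (\<lambda>x. vint H (k x) :: real^'m::finite)"
  using H unfolding vint_def
proof (induction H)
  case (Cons p H)
  obtain v M where p: "p = (v, M)" by fastforce
  have "continuous_on U (\<lambda>x. integral\<^sup>L M (k x))"
    using Cons.prems p
    by (intro continuous_on_integral_admissible_param[OF _ compact_T cont]) (auto simp: vmeas_on_def)
  moreover have "vmeas_on T H" using Cons.prems by (auto simp: vmeas_on_def)
  ultimately show ?case using Cons.IH p by (auto intro!: continuous_intros)
qed simp

lemma sint_add:
  assumes S: "smeas_on T S" and "continuous_on T f" "continuous_on T g"
  shows "sint S (\<lambda>t. f t + g t) = sint S f + sint S g"
proof -
  have "\<And>r M. (r, M) \<in> set S \<Longrightarrow> integral\<^sup>L M (\<lambda>t. f t + g t) = integral\<^sup>L M f + integral\<^sup>L M g"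
    using assms
    by (intro Bochner_Integration.integral_add
        admissible_meas_integrable[OF smeas_on_admissible[OF S] compact_T])
  then have "sint S (\<lambda>t. f t + g t)
      = sum_list (map (\<lambda>(r, M). r * integral\<^sup>L M f + r * integral\<^sup>L M g) S)"
    unfolding sint_def by (intro arg_cong[where f=sum_list] map_cong) (auto simp: algebra_simps)
  also have "\<dots> = sint S f + sint S g" by (induction S) (auto simp: sint_def algebra_simps)
  finally show ?thesis .
qed

lemma sint_diff:
  assumes S: "smeas_on T S" and "continuous_on T f" "continuous_on T g"
  shows "sint S (\<lambda>t. f t - g t) = sint S f - sint S g"
  using sint_add[OF S continuous_on_diff[OF assms(2,3)] assms(3)] by simp

lemma sint_sum:
  assumes S: "smeas_on T S" and "finite I" and "\<And>i. i \<in> I \<Longrightarrow> continuous_on T (f i)"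
  shows "sint S (\<lambda>t. \<Sum>i\<in>I. f i t) = (\<Sum>i\<in>I. sint S (f i))"
proof -
  have "\<And>r M. (r, M) \<in> set S \<Longrightarrow> r * integral\<^sup>L M (\<lambda>t. \<Sum>i\<in>I. f i t) = (\<Sum>i\<in>I. r * integral\<^sup>L M (f i))"
    using assms
    by (subst Bochner_Integration.integral_sum)
       (auto simp: sum_distrib_left
         intro!: admissible_meas_integrable[OF smeas_on_admissible[OF S] compact_T])
  then have "sint S (\<lambda>t. \<Sum>i\<in>I. f i t) = sum_list (map (\<lambda>(r, M). \<Sum>i\<in>I. r * integral\<^sup>L M (f i)) S)"
    unfolding sint_def by (intro arg_cong[where f=sum_list] map_cong) auto
  also have "\<dots> = (\<Sum>i\<in>I. sint S (f i))"
    unfolding sint_def split_beta' by (rule sum_list_map_sum_swap)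
  finally show ?thesis .
qed

lemma sint_double_sum:
  assumes S: "smeas_on T S" and "finite I" and "\<And>i j. i \<in> I \<Longrightarrow> j \<in> I \<Longrightarrow> continuous_on T (g i j)"
  shows "sint S (\<lambda>t. \<Sum>i\<in>I. \<Sum>j\<in>I. d i j * g i j t) = (\<Sum>i\<in>I. \<Sum>j\<in>I. d i j * sint S (g i j))"
  using assms by (simp add: sint_sum sint_mult continuous_on_sum continuous_on_mult_left)

lemma sint_interval_Fubini:
  fixes p q :: real
  assumes S: "smeas_on T S" and cont: "continuous_on (T \<times> {p..q}) (\<lambda>(t, v). k t v)"
  shows "sint S (\<lambda>t. integral {p..q} (k t)) = integral {p..q} (\<lambda>v. sint S (\<lambda>t. k t v))"
proof -
  have "(\<lambda>v. r * integral\<^sup>L M (\<lambda>t. k t v)) integrable_on {p..q}" if "(r, M) \<in> set S" for r M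
    by (intro integrable_continuous_interval continuous_on_mult_left
        continuous_on_integral_admissible_param[OF smeas_on_admissible[OF S that] compact_T]
        continuous_on_swap_args[OF cont])
  then have "integral {p..q} (\<lambda>v. sint S (\<lambda>t. k t v))
      = sum_list (map (\<lambda>(r, M). integral {p..q} (\<lambda>v. r * integral\<^sup>L M (\<lambda>t. k t v))) S)"
    unfolding sint_def using integral_sum_list[of S "\<lambda>(r, M) v. r * integral\<^sup>L M (\<lambda>t. k t v)"]
    by (simp add: split_beta')
  also have "\<dots> = sint S (\<lambda>t. integral {p..q} (k t))"
    unfolding sint_def
    by (intro arg_cong[where f=sum_list] map_cong)
       (auto simp: admissible_meas_interval_Fubini[OF smeas_on_admissible[OF S] compact_T cont])
  finally show ?thesis ..
qed

lemma vint_interval_Fubini: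
  fixes p q :: real
  assumes H: "vmeas_on T H" and cont: "continuous_on (T \<times> {p..q}) (\<lambda>(t, v). k t v)"
  shows "vint H (\<lambda>t. integral {p..q} (k t))
       = integral {p..q} (\<lambda>v. vint H (\<lambda>t. k t v) :: real^'m::finite)"
proof -
  have int: "(\<lambda>v. vint H (\<lambda>t. k t v)) integrable_on {p..q}"
    by (intro integrable_continuous_interval
        continuous_on_vint_param[OF H continuous_on_swap_args[OF cont]])
  have "x \<bullet> vint H (\<lambda>t. integral {p..q} (k t)) = x \<bullet> integral {p..q} (\<lambda>v. vint H (\<lambda>t. k t v))" for x
    using integral_linear[OF int bounded_linear_inner_right, of x]
    by (simp add: inner_vint o_def sint_interval_Fubini[OF smeas_on_proj_vmeas[OF H] cont])
  then show ?thesis using vector_eq_ldot by blast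
qed

lemma sdint_eq_sint_sint:
  assumes S: "smeas_on T S" and S': "smeas_on T S'"
    and cont: "continuous_on (T \<times> T) (\<lambda>(t, s). k t s)"
  shows "sdint k S S' = sint S (\<lambda>t. sint S' (k t))"
proof -
  have "sum_list (map (\<lambda>(q, N). r * q * (\<integral>t. (\<integral>s. k t s \<partial>N) \<partial>M)) S')
      = r * integral\<^sup>L M (\<lambda>t. sint S' (k t))"
    if rM: "(r, M) \<in> set S" for r M
  proof -
    have "integrable M (\<lambda>t. q * (\<integral>s. k t s \<partial>N))" if "(q, N) \<in> set S'" for q N
      by (intro integrable_mult_right
          admissible_meas_integrable[OF smeas_on_admissible[OF S rM] compact_T]
          continuous_on_integral_admissible_param[OF smeas_on_admissible[OF S' that] compact_T cont])
    then have "integral\<^sup>L M (\<lambda>t. sint S' (k t))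
        = sum_list (map (\<lambda>(q, N). q * (\<integral>t. (\<integral>s. k t s \<partial>N) \<partial>M)) S')"
      unfolding sint_def using lebesgue_integral_sum_list[of S' M "\<lambda>(q, N) t. q * (\<integral>s. k t s \<partial>N)"]
      by (simp add: split_beta' o_def)
    then show ?thesis by (simp add: split_beta' sum_list_const_mult o_def mult.assoc)
  qed
  then show ?thesis unfolding sdint_def sint_def[of S]
    by (intro arg_cong[where f=sum_list] map_cong) auto
qed

lemma sdint_swap:
  assumes S: "smeas_on T S" and S': "smeas_on T S'"
    and cont: "continuous_on (T \<times> T) (\<lambda>(t, s). k t s)"
  shows "sdint k S S' = sdint (\<lambda>t s. k s t) S' S"
proof -
  have Fubini: "\<And>r M q N. (r, M) \<in> set S \<Longrightarrow> (q, N) \<in> set S' \<Longrightarrow>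
     (\<integral>t. (\<integral>s. k t s \<partial>N) \<partial>M) = (\<integral>s. (\<integral>t. k t s \<partial>M) \<partial>N)"
    by (rule admissible_meas_Fubini[OF smeas_on_admissible[OF S] smeas_on_admissible[OF S']
        compact_T compact_T cont])
  have "sdint k S S' = sum_list (map (\<lambda>(r, M). sum_list (map (\<lambda>(q, N).
      q * r * (\<integral>s. (\<integral>t. k t s \<partial>M) \<partial>N)) S')) S)"
    unfolding sdint_def
    by (rule arg_cong[where f=sum_list], rule map_cong[OF refl], clarsimp,
        rule arg_cong[where f=sum_list], rule map_cong[OF refl], clarsimp simp: Fubini mult.commute)
  also have "\<dots> = sdint (\<lambda>t s. k s t) S' S"
    unfolding sdint_def split_beta' by (rule sum_list_map_swap)
  finally show ?thesis .
qed

lemma sdint_cong: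
  assumes S: "smeas_on T S" and S': "smeas_on T S'"
    and "\<And>t s. t \<in> T \<Longrightarrow> s \<in> T \<Longrightarrow> k t s = k' t s"
  shows "sdint k S S' = sdint k' S S'"
proof -
  have eq: "\<And>r M q N. (r, M) \<in> set S \<Longrightarrow> (q, N) \<in> set S' \<Longrightarrow>
      (\<integral>t. (\<integral>s. k t s \<partial>N) \<partial>M) = (\<integral>t. (\<integral>s. k' t s \<partial>N) \<partial>M)"
    using assms admissible_measD(2)[OF smeas_on_admissible[OF S]]
      admissible_measD(2)[OF smeas_on_admissible[OF S']]
    by (intro Bochner_Integration.integral_cong refl) auto
  show ?thesis
    unfolding sdint_def
    by (rule arg_cong[where f=sum_list], rule map_cong[OF refl], clarsimp,
        rule arg_cong[where f=sum_list], rule map_cong[OF refl], clarsimp simp: eq)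
qed

lemma sdint_add:
  assumes S: "smeas_on T S" and S': "smeas_on T S'"
    and k1: "continuous_on (T \<times> T) (\<lambda>(t, s). k1 t s)"
    and k2: "continuous_on (T \<times> T) (\<lambda>(t, s). k2 t s)"
  shows "sdint (\<lambda>t s. k1 t s + k2 t s) S S' = sdint k1 S S' + sdint k2 S S'"
proof -
  have k: "continuous_on (T \<times> T) (\<lambda>(t, s). k1 t s + k2 t s)"
    using continuous_on_add[OF k1 k2] by (simp add: split_beta')
  have "sdint (\<lambda>t s. k1 t s + k2 t s) S S' = sint S (\<lambda>t. sint S' (\<lambda>s. k1 t s + k2 t s))"
    by (rule sdint_eq_sint_sint[OF S S' k])
  also have "\<dots> = sint S (\<lambda>t. sint S' (k1 t) + sint S' (k2 t))"
    by (rule sint_cong[OF S])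
       (use continuous_on_slice[OF k1] continuous_on_slice[OF k2] in \<open>simp add: sint_add[OF S']\<close>)
  also have "\<dots> = sint S (\<lambda>t. sint S' (k1 t)) + sint S (\<lambda>t. sint S' (k2 t))"
    by (intro sint_add[OF S] continuous_on_sint_param[OF S'] k1 k2)
  finally show ?thesis
    by (simp add: sdint_eq_sint_sint[OF S S' k1] sdint_eq_sint_sint[OF S S' k2])
qed

lemma sdint_bound:
  assumes S: "smeas_on T S" and S': "smeas_on T S'"
    and bound: "\<And>t s. t \<in> T \<Longrightarrow> s \<in> T \<Longrightarrow> \<bar>k t s\<bar> \<le> e"
  shows "\<bar>sdint k S S'\<bar> \<le> smeas_mass T S * smeas_mass T S' * e"
proof -
  have summand: "\<bar>r * q * (\<integral>t. (\<integral>s. k t s \<partial>N) \<partial>M)\<bar> \<le> (\<bar>r\<bar> * measure M T) * (\<bar>q\<bar> * measure N T) * e"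
    if "(r, M) \<in> set S" "(q, N) \<in> set S'" for r M q N
  proof -
    have "\<bar>\<integral>t. (\<integral>s. k t s \<partial>N) \<partial>M\<bar> \<le> (e * measure N T) * measure M T"
      by (intro admissible_meas_integral_bound[OF smeas_on_admissible[OF S that(1)]]
          admissible_meas_integral_bound[OF smeas_on_admissible[OF S' that(2)]] bound)
    then have "\<bar>r * q\<bar> * \<bar>\<integral>t. (\<integral>s. k t s \<partial>N) \<partial>M\<bar> \<le> \<bar>r * q\<bar> * ((e * measure N T) * measure M T)"
      by (intro mult_left_mono) auto
    then show ?thesis by (simp add: abs_mult algebra_simps)
  qed
  have "\<bar>sdint k S S'\<bar> \<le> sum_list (map (\<lambda>(r, M). sum_list (map (\<lambda>(q, N).
      (\<bar>r\<bar> * measure M T) * (\<bar>q\<bar> * measure N T) * e) S')) S)"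
    unfolding sdint_def
    by (intro order_trans[OF sum_list_abs] sum_list_mono)
       (auto intro!: order_trans[OF sum_list_abs] sum_list_mono summand simp: o_def)
  also have "\<dots> = smeas_mass T S * smeas_mass T S' * e"
    unfolding smeas_mass_def split_beta' by (rule sum_list_map_product)
  finally show ?thesis .
qed

lemma sdint_separable:
  assumes S: "smeas_on T S" and S': "smeas_on T S'" and I: "finite I"
    and p: "\<And>i. i \<in> I \<Longrightarrow> continuous_on T (p i)"
    and q: "\<And>j. j \<in> I \<Longrightarrow> continuous_on T (q j)"
  shows "sdint (\<lambda>t s. \<Sum>i\<in>I. \<Sum>j\<in>I. c i j * p i t * q j s) S S'
       = (\<Sum>i\<in>I. \<Sum>j\<in>I. c i j * sint S (p i) * sint S' (q j))"
proof -
  have cont: "continuous_on (T \<times> T) (\<lambda>(t, s). \<Sum>i\<in>I. \<Sum>j\<in>I. c i j * p i t * q j s)"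
    using p q by (auto simp: case_prod_beta intro!: continuous_intros
        continuous_on_compose2[OF p] continuous_on_compose2[OF q])
  have inner: "sint S' (\<lambda>s. \<Sum>i\<in>I. \<Sum>j\<in>I. c i j * p i t * q j s)
      = (\<Sum>i\<in>I. \<Sum>j\<in>I. (c i j * sint S' (q j)) * p i t)" for t
    using sint_double_sum[OF S' I, of "\<lambda>i j. q j" "\<lambda>i j. c i j * p i t"] q by (simp add: mult_ac)
  have "sdint (\<lambda>t s. \<Sum>i\<in>I. \<Sum>j\<in>I. c i j * p i t * q j s) S S'
      = sint S (\<lambda>t. sint S' (\<lambda>s. \<Sum>i\<in>I. \<Sum>j\<in>I. c i j * p i t * q j s))"
    by (rule sdint_eq_sint_sint[OF S S' cont])
  also have "\<dots> = sint S (\<lambda>t. \<Sum>i\<in>I. \<Sum>j\<in>I. (c i j * sint S' (q j)) * p i t)"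
    by (simp only: inner)
  also have "\<dots> = (\<Sum>i\<in>I. \<Sum>j\<in>I. c i j * sint S (p i) * sint S' (q j))"
    using sint_double_sum[OF S I, of "\<lambda>i j. p i" "\<lambda>i j. c i j * sint S' (q j)"] p
    by (simp add: mult_ac)
  finally show ?thesis .
qed

end

lemma fmat_vint:
  assumes "compact T" and H: "vmeas_on T H" and F: "continuous_on T F"
  shows "vint H (\<lambda>t. z \<bullet> F t) = z v* fmat F (H :: ('m::finite) vmeas)"
proof -
  have "continuous_on T (\<lambda>t. F t $ i)" for i
    by (rule continuous_on_compose2[OF linear_continuous_on[OF bounded_linear_vec_nth] F]) auto
  then have "y \<bullet> vint H (\<lambda>t. z \<bullet> F t) = (\<Sum>i\<in>UNIV. sint (proj_vmeas y H) (\<lambda>t. z $ i * F t $ i))" for y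
    unfolding inner_vint
    by (simp add: inner_vec_def sint_sum[OF assms(1) smeas_on_proj_vmeas[OF H]]
        continuous_on_mult_left)
  also have "\<dots> y = y \<bullet> (z v* fmat F H)" for y
    by (simp add: sint_mult inner_vint[symmetric] vector_matrix_mult_def fmat_def inner_vec_def
        sum_distrib_left mult_ac) (rule sum.swap)
  finally show ?thesis using vector_eq_ldot by blast
qed

section \<open>The covariance form of the integrated model\<close>

text \<open>The covariance of  int y~ dS0 + int y dS1  and  int y~ dT0 + int y dT1
  in the integrated model.\<close>

definition cov_form :: "real \<Rightarrow> (real \<Rightarrow> real \<Rightarrow> real) \<Rightarrow> smeas \<Rightarrow> smeas \<Rightarrow> smeas \<Rightarrow> smeas \<Rightarrow> real" where
  "cov_form a k S0 S1 T0 T1 =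
     sdint (integrated_kernel a k) S0 T0 + sdint (\<lambda>t s. integrated_kernel_dt a k s t) S0 T1
   + sdint (integrated_kernel_dt a k) S1 T0 + sdint k S1 T1"

lemma inner_cov2:
  "(x::real^'m::finite) \<bullet> (cov2 (integrated_kernel a k) (integrated_kernel_dt a k) k H0 H1 *v x)
     = cov_form a k (proj_vmeas x H0) (proj_vmeas x H1) (proj_vmeas x H0) (proj_vmeas x H1)"
  by (simp add: cov2_def cov_form_def matrix_vector_mult_add_rdistrib inner_add_right inner_dint)

lemma cov_form_diff:
  "cov_form a k (S0 @ neg_smeas T0) (S1 @ neg_smeas T1) (S0 @ neg_smeas T0) (S1 @ neg_smeas T1) =
   cov_form a k S0 S1 S0 S1 - cov_form a k S0 S1 T0 T1
   - cov_form a k T0 T1 S0 S1 + cov_form a k T0 T1 T0 T1"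
  by (simp add: cov_form_def sdint_append_left sdint_append_right sdint_neg_left sdint_neg_right
      algebra_simps)

lemma integral_double_sum:
  assumes "finite I" and "\<And>i j. continuous_on {p..q} (g i j)"
  shows "integral {p..q} (\<lambda>v. \<Sum>i\<in>I. \<Sum>j\<in>I. d i j * g i j v)
       = (\<Sum>i\<in>I. \<Sum>j\<in>I. d i j * integral {p..q} (g i j :: real \<Rightarrow> real))"
  using assms
  by (simp add: integral_sum integrable_continuous_interval continuous_on_sum continuous_on_mult_left)

lemma integrated_kernel_dt_separable:
  assumes "finite I" and \<phi>: "\<And>i. continuous_on UNIV (\<phi> i)"
  shows "integrated_kernel_dt a (\<lambda>u v. \<Sum>i\<in>I. \<Sum>j\<in>I. c i j * \<phi> i u * \<phi> j v) t s
       = (\<Sum>i\<in>I. \<Sum>j\<in>I. c i j * \<phi> i t * integral {a..s} (\<phi> j))"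
  using integral_double_sum[OF assms(1), of a s "\<lambda>i j. \<phi> j" "\<lambda>i j. c i j * \<phi> i t"]
    continuous_on_subset[OF \<phi>]
  by (simp add: integrated_kernel_dt_def mult.assoc)

lemma integrated_kernel_separable:
  assumes "finite I" and \<phi>: "\<And>i. continuous_on UNIV (\<phi> i)"
  shows "integrated_kernel a (\<lambda>u v. \<Sum>i\<in>I. \<Sum>j\<in>I. c i j * \<phi> i u * \<phi> j v) t s
       = (\<Sum>i\<in>I. \<Sum>j\<in>I. c i j * integral {a..t} (\<phi> i) * integral {a..s} (\<phi> j))"
  unfolding integrated_kernel_eq_integral_dt integrated_kernel_dt_separable[OF assms]
  using integral_double_sum[OF assms(1), of a t "\<lambda>i j. \<phi> i" "\<lambda>i j. c i j * integral {a..s} (\<phi> j)"]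
    continuous_on_subset[OF \<phi>]
  by (simp add: mult_ac)

lemma nonneg_if_ge_neg_eps:
  fixes x C :: real
  assumes "\<And>e. e > 0 \<Longrightarrow> - C * e \<le> x"
  shows "0 \<le> x"
proof (rule field_le_epsilon)
  fix e :: real
  assume "0 < e"
  define e' where "e' = e / (\<bar>C\<bar> + 1)"
  have "0 < e'" using \<open>0 < e\<close> by (simp add: e'_def add_nonneg_pos)
  have "\<bar>C\<bar> * e' \<le> e"
    using \<open>0 < e\<close> by (simp add: e'_def field_simps add_nonneg_pos)
  moreover have "- \<bar>C\<bar> * e' \<le> - C * e'" using \<open>0 < e'\<close> by simp
  ultimately show "0 \<le> x + e" using assms[OF \<open>0 < e'\<close>] by linarith
qed

lemma hat_partition_of_unity:
  assumes "a < b" and "r > 0"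
  obtains n :: nat and x :: "nat \<Rightarrow> real" and \<phi> :: "nat \<Rightarrow> real \<Rightarrow> real" where
    "\<And>i. x i \<in> {a..b}" "\<And>i. continuous_on UNIV (\<phi> i)" "\<And>i u. 0 \<le> \<phi> i u"
    "\<And>u. u \<in> {a..b} \<Longrightarrow> (\<Sum>i\<le>n. \<phi> i u) = 1"
    "\<And>i u. i \<le> n \<Longrightarrow> \<phi> i u \<noteq> 0 \<Longrightarrow> \<bar>u - x i\<bar> < r"
proof -
  obtain n :: nat where n: "(b - a) / r < real n" using reals_Archimedean2 by blast
  have "0 < (b - a) / r" using assms by simp
  then have npos: "real n > 0" using n by linarith
  define h where "h = (b - a) / real n"
  have hpos: "h > 0" using assms npos by (simp add: h_def)
  have hn: "h * real n = b - a" using npos by (simp add: h_def)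
  have hr: "h < r" using n assms npos by (simp add: h_def field_simps)
  define \<sigma> where "\<sigma> i u = max 0 (min 1 ((u - a) / h - real i + 1))" for i :: nat and u :: real
  define \<phi> where "\<phi> i u = \<sigma> i u - \<sigma> (Suc i) u" for i u
  define x where "x i = a + real (min i n) * h" for i
  show ?thesis
  proof (rule that[of x \<phi> n])
    show "x i \<in> {a..b}" for i
    proof -
      have "real (min i n) * h \<le> real n * h" using hpos by (intro mult_right_mono) auto
      then show ?thesis using hpos hn by (auto simp: x_def algebra_simps)
    qed
    show "continuous_on UNIV (\<phi> i)" for i
      unfolding \<phi>_def \<sigma>_def using hpos by (auto intro!: continuous_intros)
    show "0 \<le> \<phi> i u" for i u
      by (simp add: \<phi>_def \<sigma>_def)
    show "(\<Sum>i\<le>n. \<phi> i u) = 1" if "u \<in> {a..b}" for u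
    proof -
      have "\<sigma> 0 u = 1" using that hpos by (simp add: \<sigma>_def)
      moreover have "(u - a) / h \<le> real n" using that hpos hn by (simp add: divide_le_eq algebra_simps)
      then have "\<sigma> (Suc n) u = 0" by (simp add: \<sigma>_def)
      ultimately show ?thesis unfolding \<phi>_def using sum_telescope[of "\<lambda>i. \<sigma> i u" n] by simp
    qed
    show "\<bar>u - x i\<bar> < r" if "i \<le> n" "\<phi> i u \<noteq> 0" for i u
    proof -
      have "\<not> (u - a) / h \<le> real i - 1" "\<not> (u - a) / h \<ge> real i + 1"
        using that(2) by (auto simp: \<phi>_def \<sigma>_def)
      then have "(real i - 1) * h < u - a" "u - a < (real i + 1) * h"
        using hpos by (auto simp: field_simps)
      then show ?thesis using that(1) hr by (auto simp: x_def algebra_simps)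
    qed
  qed
qed

lemma kernel_hat_approximation:
  fixes K :: "real \<Rightarrow> real \<Rightarrow> real"
  assumes ab: "a < b" and cK: "continuous_on ({a..b} \<times> {a..b}) (\<lambda>(u, v). K u v)" and e: "\<epsilon> > 0"
  obtains n :: nat and x :: "nat \<Rightarrow> real" and \<phi> :: "nat \<Rightarrow> real \<Rightarrow> real" where
    "\<And>i. x i \<in> {a..b}" "\<And>i. continuous_on UNIV (\<phi> i)"
    "\<And>u v. u \<in> {a..b} \<Longrightarrow> v \<in> {a..b} \<Longrightarrow>
       \<bar>K u v - (\<Sum>i\<le>n. \<Sum>j\<le>n. K (x i) (x j) * \<phi> i u * \<phi> j v)\<bar> \<le> \<epsilon>"
proof -
  have "uniformly_continuous_on ({a..b} \<times> {a..b}) (\<lambda>(u, v). K u v)"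
    by (rule compact_uniformly_continuous[OF cK]) (intro compact_Times compact_Icc)
  then obtain \<delta> where d: "\<delta> > 0"
    and dK: "\<And>z z'. z \<in> {a..b} \<times> {a..b} \<Longrightarrow> z' \<in> {a..b} \<times> {a..b} \<Longrightarrow>
      dist z' z < \<delta> \<Longrightarrow> dist ((\<lambda>(u, v). K u v) z') ((\<lambda>(u, v). K u v) z) < \<epsilon>"
    unfolding uniformly_continuous_on_def using e by metis
  obtain n :: nat and x :: "nat \<Rightarrow> real" and \<phi> :: "nat \<Rightarrow> real \<Rightarrow> real"
    where xab: "\<And>i. x i \<in> {a..b}" and cphi: "\<And>i. continuous_on UNIV (\<phi> i)"
      and nonneg: "\<And>i u. 0 \<le> \<phi> i u" and sum1: "\<And>u. u \<in> {a..b} \<Longrightarrow> (\<Sum>i\<le>n. \<phi> i u) = 1"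
      and supp: "\<And>i u. i \<le> n \<Longrightarrow> \<phi> i u \<noteq> 0 \<Longrightarrow> \<bar>u - x i\<bar> < \<delta> / 2"
    by (rule hat_partition_of_unity[OF ab half_gt_zero[OF d]]) blast
  show ?thesis
  proof (rule that[of x \<phi> n])
    show "x i \<in> {a..b}" for i by (rule xab)
    show "continuous_on UNIV (\<phi> i)" for i by (rule cphi)
    fix u v assume u: "u \<in> {a..b}" and v: "v \<in> {a..b}"
    have "(\<Sum>i\<le>n. \<Sum>j\<le>n. (K u v - K (x i) (x j)) * (\<phi> i u * \<phi> j v))
        = K u v * (\<Sum>i\<le>n. \<phi> i u) * (\<Sum>j\<le>n. \<phi> j v)
          - (\<Sum>i\<le>n. \<Sum>j\<le>n. K (x i) (x j) * \<phi> i u * \<phi> j v)"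
      by (simp add: right_diff_distrib sum_subtractf sum_distrib_left sum_distrib_right mult_ac)
    then have "K u v - (\<Sum>i\<le>n. \<Sum>j\<le>n. K (x i) (x j) * \<phi> i u * \<phi> j v) =
        (\<Sum>i\<le>n. \<Sum>j\<le>n. (K u v - K (x i) (x j)) * (\<phi> i u * \<phi> j v))"
      using sum1[OF u] sum1[OF v] by simp
    also have "\<bar>\<dots>\<bar> \<le> (\<Sum>i\<le>n. \<Sum>j\<le>n. \<epsilon> * (\<phi> i u * \<phi> j v))"
    proof (rule order_trans[OF sum_abs], rule sum_mono, rule order_trans[OF sum_abs], rule sum_mono)
      fix i j assume i: "i \<in> {..n}" and j: "j \<in> {..n}"
      show "\<bar>(K u v - K (x i) (x j)) * (\<phi> i u * \<phi> j v)\<bar> \<le> \<epsilon> * (\<phi> i u * \<phi> j v)"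
      proof (cases "\<phi> i u * \<phi> j v = 0")
        case True then show ?thesis by (metis abs_0 mult_zero_right order_refl)
      next
        case False
        then have "\<phi> i u \<noteq> 0" "\<phi> j v \<noteq> 0" by auto
        then have hu: "\<bar>u - x i\<bar> < \<delta> / 2" and hv: "\<bar>v - x j\<bar> < \<delta> / 2" using supp i j by auto
        have "dist (u, v) (x i, x j) \<le> norm (u - x i) + norm (v - x j)"
          using norm_Pair_le[of "u - x i" "v - x j"] by (simp add: dist_norm)
        also have "\<dots> < \<delta>" using hu hv by simp
        finally have "dist (K u v) (K (x i) (x j)) < \<epsilon>"
          using dK[of "(x i, x j)" "(u, v)"] u v xab by auto
        then have "\<bar>K u v - K (x i) (x j)\<bar> \<le> \<epsilon>" by (simp add: dist_real_def)
        then show ?thesis using nonneg[of i u] nonneg[of j v]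
          by (simp add: abs_mult mult_right_mono)
      qed
    qed
    also have "\<dots> = \<epsilon> * (\<Sum>i\<le>n. \<phi> i u) * (\<Sum>j\<le>n. \<phi> j v)"
      by (simp add: sum_distrib_left sum_distrib_right mult_ac)
    also have "\<dots> = \<epsilon>" using sum1[OF u] sum1[OF v] by simp
    finally show "\<bar>K u v - (\<Sum>i\<le>n. \<Sum>j\<le>n. K (x i) (x j) * \<phi> i u * \<phi> j v)\<bar> \<le> \<epsilon>" .
  qed
qed

locale integrated_window =
  fixes a A B :: real
  assumes a_le_A: "a \<le> A" and A_le_B: "A \<le> B"
begin

lemma mem_observation_interval: "t \<in> {A..B} \<Longrightarrow> t \<in> {a..B}"
  using a_le_A by auto

lemma integrated_kernels_continuous:
  assumes "continuous_on ({a..B} \<times> {a..B}) (\<lambda>(u, v). k u v)"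
  shows "continuous_on ({A..B} \<times> {A..B}) (\<lambda>(t, s). integrated_kernel a k t s)"
    "continuous_on ({A..B} \<times> {A..B}) (\<lambda>(t, s). integrated_kernel_dt a k t s)"
    "continuous_on ({A..B} \<times> {A..B}) (\<lambda>(t, s). integrated_kernel_dt a k s t)"
    "continuous_on ({A..B} \<times> {A..B}) (\<lambda>(t, s). k t s)"
proof -
  have sub: "{A..B} \<times> {A..B} \<subseteq> {a..B} \<times> {a..B}" using a_le_A by auto
  show "continuous_on ({A..B} \<times> {A..B}) (\<lambda>(t, s). integrated_kernel a k t s)"
    by (rule continuous_on_subset[OF integrated_kernel_continuous[OF assms] sub])
  show dt: "continuous_on ({A..B} \<times> {A..B}) (\<lambda>(t, s). integrated_kernel_dt a k t s)"
    by (rule continuous_on_subset[OF integrated_kernel_dt_continuous[OF assms] sub])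
  show "continuous_on ({A..B} \<times> {A..B}) (\<lambda>(t, s). integrated_kernel_dt a k s t)"
    using continuous_on_swap_args[OF dt] by simp
  show "continuous_on ({A..B} \<times> {A..B}) (\<lambda>(t, s). k t s)"
    by (rule continuous_on_subset[OF assms sub])
qed

lemma cov_form_eq_sint:
  assumes S0: "smeas_on {A..B} S0" and S1: "smeas_on {A..B} S1"
    and T0: "smeas_on {A..B} T0" and T1: "smeas_on {A..B} T1"
    and k: "continuous_on ({a..B} \<times> {a..B}) (\<lambda>(u, v). k u v)"
  shows "cov_form a k S0 S1 T0 T1
       = sint S0 (\<lambda>t. sint T0 (integrated_kernel a k t) + sint T1 (\<lambda>s. integrated_kernel_dt a k s t))
       + sint S1 (\<lambda>t. sint T0 (integrated_kernel_dt a k t) + sint T1 (k t))"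
proof -
  note cont = integrated_kernels_continuous[OF k]
  note sdint_sint = sdint_eq_sint_sint[OF compact_Icc]
  note sint_param = continuous_on_sint_param[OF compact_Icc]
  show ?thesis
    unfolding cov_form_def
    by (simp add: sdint_sint[OF S0 T0 cont(1)] sdint_sint[OF S0 T1 cont(3)]
        sdint_sint[OF S1 T0 cont(2)] sdint_sint[OF S1 T1 cont(4)]
        sint_add[OF compact_Icc S0 sint_param[OF T0 cont(1)] sint_param[OF T1 cont(3)]]
        sint_add[OF compact_Icc S1 sint_param[OF T0 cont(2)] sint_param[OF T1 cont(4)]])
qed

lemma cov_form_add:
  assumes S0: "smeas_on {A..B} S0" and S1: "smeas_on {A..B} S1"
    and T0: "smeas_on {A..B} T0" and T1: "smeas_on {A..B} T1"
    and k1: "continuous_on ({a..B} \<times> {a..B}) (\<lambda>(u, v). k1 u v)"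
    and k2: "continuous_on ({a..B} \<times> {a..B}) (\<lambda>(u, v). k2 u v)"
  shows "cov_form a (\<lambda>u v. k1 u v + k2 u v) S0 S1 T0 T1
       = cov_form a k1 S0 S1 T0 T1 + cov_form a k2 S0 S1 T0 T1"
proof -
  note c1 = integrated_kernels_continuous[OF k1] and c2 = integrated_kernels_continuous[OF k2]
  note add = sdint_add[OF compact_Icc] and cong = sdint_cong[OF compact_Icc]
  have "sdint (integrated_kernel a (\<lambda>u v. k1 u v + k2 u v)) S0 T0
      = sdint (integrated_kernel a k1) S0 T0 + sdint (integrated_kernel a k2) S0 T0"
    by (subst add[OF S0 T0 c1(1) c2(1), symmetric], rule cong[OF S0 T0])
       (use mem_observation_interval in \<open>simp add: integrated_kernel_add[OF k1 k2]\<close>)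
  moreover have "sdint (\<lambda>t s. integrated_kernel_dt a (\<lambda>u v. k1 u v + k2 u v) s t) S0 T1
      = sdint (\<lambda>t s. integrated_kernel_dt a k1 s t) S0 T1
      + sdint (\<lambda>t s. integrated_kernel_dt a k2 s t) S0 T1"
    by (subst add[OF S0 T1 c1(3) c2(3), symmetric], rule cong[OF S0 T1])
       (use mem_observation_interval in \<open>simp add: integrated_kernel_dt_add[OF k1 k2]\<close>)
  moreover have "sdint (integrated_kernel_dt a (\<lambda>u v. k1 u v + k2 u v)) S1 T0
      = sdint (integrated_kernel_dt a k1) S1 T0 + sdint (integrated_kernel_dt a k2) S1 T0"
    by (subst add[OF S1 T0 c1(2) c2(2), symmetric], rule cong[OF S1 T0])
       (use mem_observation_interval in \<open>simp add: integrated_kernel_dt_add[OF k1 k2]\<close>)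
  moreover have "sdint (\<lambda>u v. k1 u v + k2 u v) S1 T1 = sdint k1 S1 T1 + sdint k2 S1 T1"
    by (rule add[OF S1 T1 c1(4) c2(4)])
  ultimately show ?thesis by (simp add: cov_form_def)
qed

lemma cov_form_bound:
  assumes S0: "smeas_on {A..B} S0" and S1: "smeas_on {A..B} S1"
    and T0: "smeas_on {A..B} T0" and T1: "smeas_on {A..B} T1"
    and bound: "\<And>u v. u \<in> {a..B} \<Longrightarrow> v \<in> {a..B} \<Longrightarrow> \<bar>k u v\<bar> \<le> e"
  shows "\<bar>cov_form a k S0 S1 T0 T1\<bar> \<le>
    (smeas_mass {A..B} S0 * smeas_mass {A..B} T0 * ((B - a) * (B - a))
     + smeas_mass {A..B} S0 * smeas_mass {A..B} T1 * (B - a)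
     + smeas_mass {A..B} S1 * smeas_mass {A..B} T0 * (B - a)
     + smeas_mass {A..B} S1 * smeas_mass {A..B} T1) * e"
proof -
  note sdint_bound = sdint_bound[OF compact_Icc]
  have "\<bar>sdint (integrated_kernel a k) S0 T0\<bar>
      \<le> smeas_mass {A..B} S0 * smeas_mass {A..B} T0 * (e * (B - a) * (B - a))"
    by (rule sdint_bound[OF S0 T0])
      (use mem_observation_interval in \<open>auto intro!: integrated_kernel_bound[OF bound]\<close>)
  moreover have "\<bar>sdint (\<lambda>t s. integrated_kernel_dt a k s t) S0 T1\<bar>
      \<le> smeas_mass {A..B} S0 * smeas_mass {A..B} T1 * (e * (B - a))"
    by (rule sdint_bound[OF S0 T1])
      (use mem_observation_interval in \<open>auto intro!: integrated_kernel_dt_bound[OF bound]\<close>)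
  moreover have "\<bar>sdint (integrated_kernel_dt a k) S1 T0\<bar>
      \<le> smeas_mass {A..B} S1 * smeas_mass {A..B} T0 * (e * (B - a))"
    by (rule sdint_bound[OF S1 T0])
      (use mem_observation_interval in \<open>auto intro!: integrated_kernel_dt_bound[OF bound]\<close>)
  moreover have "\<bar>sdint k S1 T1\<bar> \<le> smeas_mass {A..B} S1 * smeas_mass {A..B} T1 * e"
    by (rule sdint_bound[OF S1 T1]) (use mem_observation_interval bound in auto)
  ultimately show ?thesis
    unfolding cov_form_def by (simp add: algebra_simps)
qed

lemma cov_form_separable:
  assumes S0: "smeas_on {A..B} S0" and S1: "smeas_on {A..B} S1" and I: "finite I"
    and \<phi>: "\<And>i. continuous_on UNIV (\<phi> i)" and c_sym: "\<And>i j. c i j = c j i"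
  defines "w i \<equiv> sint S0 (\<lambda>t. integral {a..t} (\<phi> i)) + sint S1 (\<phi> i)"
  shows "cov_form a (\<lambda>u v. \<Sum>i\<in>I. \<Sum>j\<in>I. c i j * \<phi> i u * \<phi> j v) S0 S1 S0 S1
       = (\<Sum>i\<in>I. \<Sum>j\<in>I. c i j * w i * w j)"
proof -
  define \<Phi> where "\<Phi> i t = integral {a..t} (\<phi> i)" for i t
  have c\<phi>: "continuous_on {A..B} (\<phi> i)" for i by (rule continuous_on_subset[OF \<phi>]) auto
  have c\<Phi>: "continuous_on {A..B} (\<Phi> i)" for i
  proof -
    have "continuous_on {a..B} (\<Phi> i)" unfolding \<Phi>_def
      by (intro indefinite_integral_continuous_1 integrable_continuous_interval
          continuous_on_subset[OF \<phi>]) auto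
    then show ?thesis by (rule continuous_on_subset) (use a_le_A in auto)
  qed
  note sep = sdint_separable[OF compact_Icc _ _ I] and cong = sdint_cong[OF compact_Icc]
  let ?k = "\<lambda>u v. \<Sum>i\<in>I. \<Sum>j\<in>I. c i j * \<phi> i u * \<phi> j v"
  have R: "integrated_kernel a ?k = (\<lambda>t s. \<Sum>i\<in>I. \<Sum>j\<in>I. c i j * \<Phi> i t * \<Phi> j s)"
    by (simp add: fun_eq_iff integrated_kernel_separable[OF I \<phi>] \<Phi>_def)
  have R1: "integrated_kernel_dt a ?k = (\<lambda>t s. \<Sum>i\<in>I. \<Sum>j\<in>I. c i j * \<phi> i t * \<Phi> j s)"
    by (simp add: fun_eq_iff integrated_kernel_dt_separable[OF I \<phi>] \<Phi>_def)
  have R1_swap: "(\<lambda>t s. integrated_kernel_dt a ?k s t) = (\<lambda>t s. \<Sum>i\<in>I. \<Sum>j\<in>I. c i j * \<Phi> i t * \<phi> j s)"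
    unfolding R1 by (rule ext, rule ext, subst sum.swap) (simp add: c_sym mult_ac)
  have "sdint (integrated_kernel a ?k) S0 S0 = (\<Sum>i\<in>I. \<Sum>j\<in>I. c i j * sint S0 (\<Phi> i) * sint S0 (\<Phi> j))"
    unfolding R by (rule sep[OF S0 S0 c\<Phi> c\<Phi>])
  moreover have "sdint (\<lambda>t s. integrated_kernel_dt a ?k s t) S0 S1
      = (\<Sum>i\<in>I. \<Sum>j\<in>I. c i j * sint S0 (\<Phi> i) * sint S1 (\<phi> j))"
    unfolding R1_swap by (rule sep[OF S0 S1 c\<Phi> c\<phi>])
  moreover have "sdint (integrated_kernel_dt a ?k) S1 S0
      = (\<Sum>i\<in>I. \<Sum>j\<in>I. c i j * sint S1 (\<phi> i) * sint S0 (\<Phi> j))"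
    unfolding R1 by (rule sep[OF S1 S0 c\<phi> c\<Phi>])
  moreover have "sdint ?k S1 S1 = (\<Sum>i\<in>I. \<Sum>j\<in>I. c i j * sint S1 (\<phi> i) * sint S1 (\<phi> j))"
    by (rule sep[OF S1 S1 c\<phi> c\<phi>])
  ultimately show ?thesis
    unfolding cov_form_def by (simp add: w_def \<Phi>_def[symmetric] sum.distrib[symmetric] algebra_simps)
qed


lemma sint_integrated_kernel_dt_increment:
  assumes k: "continuous_on ({a..B} \<times> {a..B}) (\<lambda>(u, v). k u v)"
    and E: "smeas_on {A..B} \<eta>" and u: "u \<in> {A..B}"
  shows "sint \<eta> (\<lambda>s. integrated_kernel_dt a k s u) - sint \<eta> (\<lambda>s. integrated_kernel_dt a k s A)
       = integral {A..u} (\<lambda>v. sint \<eta> (\<lambda>s. k s v))"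
proof -
  have slice: "continuous_on {A..B} (\<lambda>s. integrated_kernel_dt a k s w)" if "w \<in> {A..B}" for w
    using continuous_on_slice[OF continuous_on_swap_args[OF integrated_kernels_continuous(2)[OF k]]
        that]
    by simp
  have "sint \<eta> (\<lambda>s. integrated_kernel_dt a k s u) - sint \<eta> (\<lambda>s. integrated_kernel_dt a k s A)
      = sint \<eta> (\<lambda>s. integrated_kernel_dt a k s u - integrated_kernel_dt a k s A)"
    using u A_le_B by (intro sint_diff[symmetric, OF compact_Icc E] slice) auto
  also have "\<dots> = sint \<eta> (\<lambda>s. integral {A..u} (k s))"
  proof (rule sint_cong[OF E])
    fix s assume s: "s \<in> {A..B}"
    have "k s integrable_on {a..u}"
      by (rule integrable_continuous_interval,
          rule continuous_on_subset[OF continuous_on_slice[OF k]])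
         (use s u a_le_A in auto)
    from Henstock_Kurzweil_Integration.integral_combine[OF a_le_A _ this] u
    show "integrated_kernel_dt a k s u - integrated_kernel_dt a k s A = integral {A..u} (k s)"
      by (simp add: integrated_kernel_dt_def)
  qed
  also have "\<dots> = integral {A..u} (\<lambda>v. sint \<eta> (\<lambda>s. k s v))"
    by (rule sint_interval_Fubini[OF compact_Icc E])
       (use u a_le_A in \<open>auto intro: continuous_on_subset[OF k]\<close>)
  finally show ?thesis .
qed

end

section \<open>Best linear unbiased estimation in the integrated model\<close>

locale integrated_model = integrated_window +
  fixes K :: "real \<Rightarrow> real \<Rightarrow> real"
  assumes A_less_B: "A < B"
    and cov_K: "cov_kernel {a..B} K"
    and cont_K: "continuous_on ({a..B} \<times> {a..B}) (\<lambda>(u, v). K u v)"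
begin

lemma K_sym: "u \<in> {a..B} \<Longrightarrow> v \<in> {a..B} \<Longrightarrow> K u v = K v u"
  using cov_K by (simp add: cov_kernel_def)

lemma integrated_kernel_K_sym:
  "t \<in> {a..B} \<Longrightarrow> s \<in> {a..B} \<Longrightarrow> integrated_kernel a K t s = integrated_kernel a K s t"
  by (rule integrated_kernel_sym[OF K_sym cont_K])

lemma cov_form_finite_rank_nonneg:
  fixes n :: nat
  assumes S0: "smeas_on {A..B} S0" and S1: "smeas_on {A..B} S1"
    and x: "\<And>i. x i \<in> {a..B}" and \<phi>: "\<And>i. continuous_on UNIV (\<phi> i)"
  shows "0 \<le> cov_form a (\<lambda>u v. \<Sum>i\<le>n. \<Sum>j\<le>n. K (x i) (x j) * \<phi> i u * \<phi> j v) S0 S1 S0 S1"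
proof -
  define w where "w i = sint S0 (\<lambda>t. integral {a..t} (\<phi> i)) + sint S1 (\<phi> i)" for i
  have "0 \<le> (\<Sum>i<Suc n. \<Sum>j<Suc n. w i * w j * K (x i) (x j))"
    using cov_K x unfolding cov_kernel_def by blast
  also have "\<dots> = (\<Sum>i\<le>n. \<Sum>j\<le>n. K (x i) (x j) * w i * w j)"
    by (simp add: lessThan_Suc_atMost mult_ac)
  also have "\<dots> = cov_form a (\<lambda>u v. \<Sum>i\<le>n. \<Sum>j\<le>n. K (x i) (x j) * \<phi> i u * \<phi> j v) S0 S1 S0 S1"
    unfolding w_def
    by (rule cov_form_separable[OF S0 S1 finite_atMost \<phi>, symmetric]) (rule K_sym[OF x x])
  finally show ?thesis .
qed

lemma cov_form_nonneg:
  assumes S0: "smeas_on {A..B} S0" and S1: "smeas_on {A..B} S1"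
  shows "0 \<le> cov_form a K S0 S1 S0 S1"
proof -
  define C where "C = smeas_mass {A..B} S0 * smeas_mass {A..B} S0 * ((B - a) * (B - a))
     + smeas_mass {A..B} S0 * smeas_mass {A..B} S1 * (B - a)
     + smeas_mass {A..B} S1 * smeas_mass {A..B} S0 * (B - a)
     + smeas_mass {A..B} S1 * smeas_mass {A..B} S1"
  have "- C * e \<le> cov_form a K S0 S1 S0 S1" if "e > 0" for e
  proof -
    have "a < B" using a_le_A A_less_B by simp
    obtain n :: nat and x :: "nat \<Rightarrow> real" and \<phi> :: "nat \<Rightarrow> real \<Rightarrow> real"
      where x: "\<And>i. x i \<in> {a..B}" and \<phi>: "\<And>i. continuous_on UNIV (\<phi> i)"
      and approx: "\<And>u v. u \<in> {a..B} \<Longrightarrow> v \<in> {a..B} \<Longrightarrow>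
         \<bar>K u v - (\<Sum>i\<le>n. \<Sum>j\<le>n. K (x i) (x j) * \<phi> i u * \<phi> j v)\<bar> \<le> e"
      by (rule kernel_hat_approximation[OF \<open>a < B\<close> cont_K \<open>e > 0\<close>]) blast
    define Kn where "Kn u v = (\<Sum>i\<le>n. \<Sum>j\<le>n. K (x i) (x j) * \<phi> i u * \<phi> j v)" for u v
    have "continuous_on UNIV (\<lambda>(u, v). Kn u v)"
      unfolding Kn_def split_beta' by (intro continuous_intros continuous_on_compose2[OF \<phi>]) auto
    then have cKn: "continuous_on ({a..B} \<times> {a..B}) (\<lambda>(u, v). Kn u v)"
      by (rule continuous_on_subset) auto
    have cdiff: "continuous_on ({a..B} \<times> {a..B}) (\<lambda>(u, v). K u v - Kn u v)"
      using continuous_on_diff[OF cont_K cKn] by (simp add: split_beta')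
    have "cov_form a K S0 S1 S0 S1
        = cov_form a Kn S0 S1 S0 S1 + cov_form a (\<lambda>u v. K u v - Kn u v) S0 S1 S0 S1"
      using cov_form_add[OF S0 S1 S0 S1 cKn cdiff] by simp
    moreover have "0 \<le> cov_form a Kn S0 S1 S0 S1"
      unfolding Kn_def by (rule cov_form_finite_rank_nonneg[OF S0 S1 x \<phi>])
    moreover have "\<bar>cov_form a (\<lambda>u v. K u v - Kn u v) S0 S1 S0 S1\<bar> \<le> C * e"
      unfolding C_def by (rule cov_form_bound[OF S0 S1 S0 S1]) (use approx in \<open>simp add: Kn_def\<close>)
    ultimately show ?thesis by linarith
  qed
  then show ?thesis by (rule nonneg_if_ge_neg_eps)
qed

lemma cov_form_sym:
  assumes S0: "smeas_on {A..B} S0" and S1: "smeas_on {A..B} S1"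
    and T0: "smeas_on {A..B} T0" and T1: "smeas_on {A..B} T1"
  shows "cov_form a K S0 S1 T0 T1 = cov_form a K T0 T1 S0 S1"
proof -
  note cont = integrated_kernels_continuous[OF cont_K]
  note swap = sdint_swap[OF compact_Icc] and cong = sdint_cong[OF compact_Icc]
  have "sdint (integrated_kernel a K) S0 T0 = sdint (integrated_kernel a K) T0 S0"
    unfolding swap[OF S0 T0 cont(1)]
    by (rule cong[OF T0 S0]) (use mem_observation_interval integrated_kernel_K_sym in auto)
  moreover have "sdint (\<lambda>t s. integrated_kernel_dt a K s t) S0 T1
      = sdint (integrated_kernel_dt a K) T1 S0"
    using swap[OF S0 T1 cont(3)] by simp
  moreover have "sdint (integrated_kernel_dt a K) S1 T0
      = sdint (\<lambda>t s. integrated_kernel_dt a K s t) T0 S1"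
    using swap[OF S1 T0 cont(2)] by simp
  moreover have "sdint K S1 T1 = sdint K T1 S1"
    unfolding swap[OF S1 T1 cont(4)]
    by (rule cong[OF T1 S1]) (use mem_observation_interval K_sym in auto)
  ultimately show ?thesis by (simp add: cov_form_def)
qed

definition reproducing ::
    "('m::finite) vmeas \<Rightarrow> 'm vmeas \<Rightarrow> (real \<Rightarrow> real^'m) \<Rightarrow> (real \<Rightarrow> real^'m) \<Rightarrow> bool" where
  "reproducing Z0 Z1 F0 F1 \<longleftrightarrow> (\<forall>t\<in>{A..B}.
     vint Z0 (integrated_kernel a K t) + vint Z1 (\<lambda>s. integrated_kernel_dt a K s t) = F0 t \<and>
     vint Z0 (integrated_kernel_dt a K t) + vint Z1 (K t) = F1 t)"

lemma cov_form_proj_reproducing: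
  fixes F0 F1 :: "real \<Rightarrow> real^'m::finite" and Z0 Z1 :: "'m vmeas"
  assumes S0: "smeas_on {A..B} S0" and S1: "smeas_on {A..B} S1"
    and Z0: "vmeas_on {A..B} Z0" and Z1: "vmeas_on {A..B} Z1"
    and rep: "reproducing Z0 Z1 F0 F1"
  shows "cov_form a K S0 S1 (proj_vmeas \<theta> Z0) (proj_vmeas \<theta> Z1)
       = sint S0 (\<lambda>t. \<theta> \<bullet> F0 t) + sint S1 (\<lambda>t. \<theta> \<bullet> F1 t)"
proof -
  have "sint (proj_vmeas \<theta> Z0) (integrated_kernel a K t)
      + sint (proj_vmeas \<theta> Z1) (\<lambda>s. integrated_kernel_dt a K s t)
      = \<theta> \<bullet> F0 t"
    "sint (proj_vmeas \<theta> Z0) (integrated_kernel_dt a K t) + sint (proj_vmeas \<theta> Z1) (K t) = \<theta> \<bullet> F1 t"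
    if "t \<in> {A..B}" for t
    using rep that unfolding reproducing_def
    by (auto simp flip: inner_vint simp: inner_add_right[symmetric])
  then show ?thesis
    unfolding cov_form_eq_sint[OF S0 S1 smeas_on_proj_vmeas[OF Z0] smeas_on_proj_vmeas[OF Z1] cont_K]
    by (intro arg_cong2[where f="(+)"] sint_cong[OF S0] sint_cong[OF S1]) simp_all
qed

lemma reproducing_unbiased:
  fixes F0 F1 :: "real \<Rightarrow> real^'m::finite" and Z0 Z1 :: "'m vmeas"
  assumes Z0: "vmeas_on {A..B} Z0" and Z1: "vmeas_on {A..B} Z1"
    and F0: "continuous_on {A..B} F0" and F1: "continuous_on {A..B} F1"
    and rep: "reproducing Z0 Z1 F0 F1"
    and inverse: "D ** (fmat F0 Z0 + fmat F1 Z1) = mat 1"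
  shows "unbiased2 F0 F1 (mmul D Z0) (mmul D Z1)"
  unfolding unbiased2_def
proof (intro allI)
  fix \<theta> :: "real^'m"
  have "x \<bullet> (vint (mmul D Z0) (\<lambda>t. \<theta> \<bullet> F0 t) + vint (mmul D Z1) (\<lambda>t. \<theta> \<bullet> F1 t)) = x \<bullet> \<theta>" for x
  proof -
    define z where "z = x v* D"
    note rep = cov_form_proj_reproducing[OF _ _ Z0 Z1 rep]
    note proj = smeas_on_proj_vmeas[OF Z0] smeas_on_proj_vmeas[OF Z1]
    have "x \<bullet> (vint (mmul D Z0) (\<lambda>t. \<theta> \<bullet> F0 t) + vint (mmul D Z1) (\<lambda>t. \<theta> \<bullet> F1 t))
        = sint (proj_vmeas z Z0) (\<lambda>t. \<theta> \<bullet> F0 t) + sint (proj_vmeas z Z1) (\<lambda>t. \<theta> \<bullet> F1 t)"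
      by (simp add: inner_add_right inner_vint proj_vmeas_mmul z_def)
    also have "\<dots>
        = cov_form a K (proj_vmeas z Z0) (proj_vmeas z Z1) (proj_vmeas \<theta> Z0) (proj_vmeas \<theta> Z1)"
      by (rule rep[OF proj, symmetric])
    also have "\<dots>
        = cov_form a K (proj_vmeas \<theta> Z0) (proj_vmeas \<theta> Z1) (proj_vmeas z Z0) (proj_vmeas z Z1)"
      by (rule cov_form_sym[OF proj proj])
    also have "\<dots> = sint (proj_vmeas \<theta> Z0) (\<lambda>t. z \<bullet> F0 t) + sint (proj_vmeas \<theta> Z1) (\<lambda>t. z \<bullet> F1 t)"
      by (rule rep[OF proj])
    also have "\<dots> = \<theta> \<bullet> (z v* (fmat F0 Z0 + fmat F1 Z1))"
      by (simp add: inner_vint[symmetric] vector_matrix_mult_add_rdistrib inner_add_right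
          fmat_vint[OF compact_Icc Z0 F0] fmat_vint[OF compact_Icc Z1 F1])
    also have "\<dots> = x \<bullet> \<theta>"
      by (simp add: z_def vector_matrix_mul_assoc inverse inner_commute)
    finally show ?thesis .
  qed
  then show "vint (mmul D Z0) (\<lambda>t. \<theta> \<bullet> F0 t) + vint (mmul D Z1) (\<lambda>t. \<theta> \<bullet> F1 t) = \<theta>"
    using vector_eq_ldot by blast
qed

lemma reproducing_cross_cov:
  fixes F0 F1 :: "real \<Rightarrow> real^'m::finite" and Z0 Z1 H0 H1 :: "'m vmeas"
  assumes H0: "vmeas_on {A..B} H0" and H1: "vmeas_on {A..B} H1" and unbiased: "unbiased2 F0 F1 H0 H1"
    and Z0: "vmeas_on {A..B} Z0" and Z1: "vmeas_on {A..B} Z1"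
    and rep: "reproducing Z0 Z1 F0 F1"
  shows "cov_form a K (proj_vmeas x H0) (proj_vmeas x H1)
      (proj_vmeas x (mmul D Z0)) (proj_vmeas x (mmul D Z1))
       = x \<bullet> (x v* D)"
proof -
  have "cov_form a K (proj_vmeas x H0) (proj_vmeas x H1)
      (proj_vmeas x (mmul D Z0)) (proj_vmeas x (mmul D Z1))
      = cov_form a K (proj_vmeas x H0) (proj_vmeas x H1)
      (proj_vmeas (x v* D) Z0) (proj_vmeas (x v* D) Z1)"
    by (simp only: proj_vmeas_mmul)
  also have "\<dots> = sint (proj_vmeas x H0) (\<lambda>t. (x v* D) \<bullet> F0 t)
      + sint (proj_vmeas x H1) (\<lambda>t. (x v* D) \<bullet> F1 t)"
    by (rule cov_form_proj_reproducing[OF smeas_on_proj_vmeas[OF H0] smeas_on_proj_vmeas[OF H1]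
        Z0 Z1 rep])
  also have "\<dots> = x \<bullet> (vint H0 (\<lambda>t. (x v* D) \<bullet> F0 t) + vint H1 (\<lambda>t. (x v* D) \<bullet> F1 t))"
    by (simp add: inner_add_right inner_vint)
  also have "\<dots> = x \<bullet> (x v* D)"
    using unbiased by (simp add: unbiased2_def)
  finally show ?thesis .
qed

lemma blue2_of_reproducing:
  fixes F0 F1 :: "real \<Rightarrow> real^'m::finite" and Z0 Z1 :: "'m vmeas"
  assumes Z0: "vmeas_on {A..B} Z0" and Z1: "vmeas_on {A..B} Z1"
    and F0: "continuous_on {A..B} F0" and F1: "continuous_on {A..B} F1"
    and rep: "reproducing Z0 Z1 F0 F1"
    and invertible: "invertible (fmat F0 Z0 + fmat F1 Z1)"
  defines "D \<equiv> matrix_inv (fmat F0 Z0 + fmat F1 Z1)"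
  shows "blue2 {A..B} F0 F1 (integrated_kernel a K) (integrated_kernel_dt a K) K
      (mmul D Z0) (mmul D Z1)"
proof -
  have "D ** (fmat F0 Z0 + fmat F1 Z1) = mat 1"
    using someI_ex[OF invertible[unfolded invertible_def]] by (simp add: D_def matrix_inv_def)
  from reproducing_unbiased[OF Z0 Z1 F0 F1 rep this]
  have unbiased: "unbiased2 F0 F1 (mmul D Z0) (mmul D Z1)" .
  have G0: "vmeas_on {A..B} (mmul D Z0)" and G1: "vmeas_on {A..B} (mmul D Z1)"
    by (intro vmeas_on_mmul Z0 Z1)+
  note cross = reproducing_cross_cov[OF _ _ _ Z0 Z1 rep]
  have "0 \<le> x \<bullet> ((cov2 (integrated_kernel a K) (integrated_kernel_dt a K) K H0 H1
      - cov2 (integrated_kernel a K) (integrated_kernel_dt a K) K (mmul D Z0) (mmul D Z1)) *v x)"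
    if H0: "vmeas_on {A..B} H0" and H1: "vmeas_on {A..B} H1" and "unbiased2 F0 F1 H0 H1" for H0 H1 x
  proof -
    note proj = smeas_on_proj_vmeas[of "{A..B}" _ x]
    have "0 \<le> cov_form a K (proj_vmeas x H0 @ neg_smeas (proj_vmeas x (mmul D Z0)))
        (proj_vmeas x H1 @ neg_smeas (proj_vmeas x (mmul D Z1)))
        (proj_vmeas x H0 @ neg_smeas (proj_vmeas x (mmul D Z0)))
        (proj_vmeas x H1 @ neg_smeas (proj_vmeas x (mmul D Z1)))"
      by (intro cov_form_nonneg smeas_on_append smeas_on_neg_smeas proj H0 H1 G0 G1)
    \<comment> \<open>both cross terms equal the quadratic term of the proposed estimator\<close>
    also have "\<dots> = x \<bullet> ((cov2 (integrated_kernel a K) (integrated_kernel_dt a K) K H0 H1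
        - cov2 (integrated_kernel a K) (integrated_kernel_dt a K) K (mmul D Z0) (mmul D Z1)) *v x)"
      using cov_form_sym[OF proj[OF H0] proj[OF H1] proj[OF G0] proj[OF G1]]
        cross[OF H0 H1 that(3)] cross[OF G0 G1 unbiased]
      by (simp add: cov_form_diff matrix_vector_mult_diff_rdistrib inner_diff_right inner_cov2)
    finally show ?thesis .
  qed
  then show ?thesis
    unfolding blue2_def psd_def using G0 G1 unbiased by blast
qed

lemma sint_integrated_kernel_increment:
  assumes E: "smeas_on {A..B} \<eta>" and u: "u \<in> {A..B}"
  shows "sint \<eta> (\<lambda>s. integrated_kernel a K s u) - sint \<eta> (\<lambda>s. integrated_kernel a K s A)
       = integral {A..u} (\<lambda>v. sint \<eta> (integrated_kernel_dt a K v))"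
proof -
  define R1' where "R1' = (\<lambda>s v. integrated_kernel_dt a K v s)"
  have cR1': "continuous_on ({a..B} \<times> {a..B}) (\<lambda>(s, v). R1' s v)"
    unfolding R1'_def by (rule continuous_on_swap_args[OF integrated_kernel_dt_continuous[OF cont_K]])
  have R_eq: "integrated_kernel a K s w = integrated_kernel_dt a R1' s w"
    if "s \<in> {a..B}" "w \<in> {a..B}" for s w
    using integrated_kernel_swap_integrals[OF K_sym cont_K that]
    by (simp add: R1'_def integrated_kernel_dt_def)
  have "sint \<eta> (\<lambda>s. integrated_kernel a K s w) = sint \<eta> (\<lambda>s. integrated_kernel_dt a R1' s w)"
    if "w \<in> {A..B}" for w
    by (rule sint_cong[OF E], rule R_eq) (use that a_le_A in auto)
  with sint_integrated_kernel_dt_increment[OF cR1' E u] u A_le_B show ?thesis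
    by (simp add: R1'_def)
qed

lemma eta_equation_deriv:
  assumes E0: "smeas_on {A..B} \<eta>0" and E1: "smeas_on {A..B} \<eta>1"
    and eta: "\<And>s. s \<in> {A..B} \<Longrightarrow>
      sint \<eta>0 (\<lambda>t. integrated_kernel a K t s) + sint \<eta>1 (\<lambda>t. integrated_kernel_dt a K t s) = 1"
    and t: "t \<in> {A..B}"
  shows "sint \<eta>0 (integrated_kernel_dt a K t) + sint \<eta>1 (K t) = 0"
proof -
  note cont = integrated_kernels_continuous[OF cont_K]
  have c0: "continuous_on {A..B} (\<lambda>v. sint \<eta>0 (integrated_kernel_dt a K v))"
    by (rule continuous_on_sint_param[OF compact_Icc E0 cont(2)])
  have c1: "continuous_on {A..B} (\<lambda>v. sint \<eta>1 (\<lambda>s. K s v))"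
    by (rule continuous_on_sint_param[OF compact_Icc E1 continuous_on_swap_args[OF cont(4)]])
  have "sint \<eta>0 (integrated_kernel_dt a K t) + sint \<eta>1 (\<lambda>s. K s t) = 0"
  proof (rule continuous_zero_if_integrals_vanish[OF A_less_B continuous_on_add[OF c0 c1] _ t])
    fix u assume u: "u \<in> {A..B}"
    have sub: "{A..u} \<subseteq> {A..B}" using u by auto
    have A: "A \<in> {A..B}" using A_le_B by simp
    have "integral {A..u} (\<lambda>v. sint \<eta>0 (integrated_kernel_dt a K v) + sint \<eta>1 (\<lambda>s. K s v))
        = integral {A..u} (\<lambda>v. sint \<eta>0 (integrated_kernel_dt a K v))
          + integral {A..u} (\<lambda>v. sint \<eta>1 (\<lambda>s. K s v))"
      by (intro integral_add integrable_continuous_interval continuous_on_subset[OF c0 sub]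
          continuous_on_subset[OF c1 sub])
    also have "\<dots> = 0"
      using sint_integrated_kernel_increment[OF E0 u]
        sint_integrated_kernel_dt_increment[OF cont_K E1 u]
        eta[OF u] eta[OF A]
      by linarith
    finally show
      "integral {A..u} (\<lambda>v. sint \<eta>0 (integrated_kernel_dt a K v) + sint \<eta>1 (\<lambda>s. K s v)) = 0" .
  qed
  moreover have "sint \<eta>1 (\<lambda>s. K s t) = sint \<eta>1 (K t)"
  proof (rule sint_cong[OF E1])
    fix s assume "s \<in> {A..B}"
    then show "K s t = K t s" using t a_le_A by (intro K_sym) auto
  qed
  ultimately show ?thesis by simp
qed

lemma reproducing_integrated_kernel:
  fixes f :: "real \<Rightarrow> real^'m::finite" and \<zeta> :: "'m vmeas"
  assumes Z: "vmeas_on {A..B} \<zeta>" and f: "continuous_on {a..B} f"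
    and \<zeta>_f: "\<And>s. s \<in> {A..B} \<Longrightarrow> vint \<zeta> (\<lambda>t. K t s) = f s"
    and E0: "smeas_on {A..B} \<eta>0" and E1: "smeas_on {A..B} \<eta>1"
    and eta: "\<And>s. s \<in> {A..B} \<Longrightarrow>
      sint \<eta>0 (\<lambda>t. integrated_kernel a K t s) + sint \<eta>1 (\<lambda>t. integrated_kernel_dt a K t s) = 1"
    and t: "t \<in> {A..B}"
  defines "c \<equiv> integral {a..A} (\<lambda>s. vint \<zeta> (\<lambda>t. K t s) - f s)"
  shows "vint (vscale (- c) \<eta>0) (integrated_kernel a K t)
       + vint (vscale (- c) \<eta>1 @ \<zeta>) (\<lambda>s. integrated_kernel_dt a K s t) = integral {a..t} f"
proof -
  define \<phi> where "\<phi> v = vint \<zeta> (\<lambda>s. K s v)" for v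
  have K_swap: "continuous_on (U \<times> V) (\<lambda>(v, s). K s v)" if "U \<subseteq> {a..B}" "V \<subseteq> {a..B}" for U V
    by (rule continuous_on_subset[OF continuous_on_swap_args[OF cont_K]]) (use that in auto)
  have "continuous_on {a..B} \<phi>"
    unfolding \<phi>_def by (rule continuous_on_vint_param[OF compact_Icc Z K_swap]) (use a_le_A in auto)
  then have int_\<phi>: "\<phi> integrable_on {a..u}" if "u \<in> {a..B}" for u
    using that
    by (intro integrable_continuous_interval continuous_on_subset[OF \<open>continuous_on {a..B} \<phi>\<close>])
      auto
  have int_f: "f integrable_on {a..u}" if "u \<in> {a..B}" for u
    using that by (intro integrable_continuous_interval continuous_on_subset[OF f]) auto
  have t_aB: "t \<in> {a..B}" using t a_le_A by auto
  have R1_t: "vint \<zeta> (\<lambda>s. integrated_kernel_dt a K s t) = integral {a..t} \<phi>"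
    unfolding integrated_kernel_dt_def \<phi>_def
    by (rule vint_interval_Fubini[OF compact_Icc Z], rule continuous_on_subset[OF cont_K])
       (use t a_le_A in auto)
  have R_t: "sint \<eta>0 (integrated_kernel a K t) = sint \<eta>0 (\<lambda>s. integrated_kernel a K s t)"
    by (rule sint_cong[OF E0], rule integrated_kernel_K_sym) (use t a_le_A in auto)
  have "integral {a..t} \<phi> - c = integral {a..t} f"
    unfolding c_def \<phi>_def[symmetric]
    by (rule integral_correct_initial_segment[OF a_le_A _ int_\<phi>[OF t_aB] int_f[OF t_aB]])
       (use t \<zeta>_f in \<open>auto simp: \<phi>_def\<close>)
  moreover have "vint (vscale (- c) \<eta>0) (integrated_kernel a K t)
      + vint (vscale (- c) \<eta>1 @ \<zeta>) (\<lambda>s. integrated_kernel_dt a K s t)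
      = (sint \<eta>0 (\<lambda>s. integrated_kernel a K s t)
         + sint \<eta>1 (\<lambda>s. integrated_kernel_dt a K s t)) *\<^sub>R (- c)
        + integral {a..t} \<phi>"
    by (simp add: vint_vscale vint_append R1_t R_t scaleR_add_left)
  ultimately show ?thesis using eta[OF t] by simp
qed

lemma reproducing_integrated_kernel_dt:
  fixes f :: "real \<Rightarrow> real^'m::finite" and \<zeta> :: "'m vmeas"
  assumes Z: "vmeas_on {A..B} \<zeta>" and \<zeta>_f: "\<And>s. s \<in> {A..B} \<Longrightarrow> vint \<zeta> (\<lambda>t. K t s) = f s"
    and deriv: "sint \<eta>0 (integrated_kernel_dt a K t) + sint \<eta>1 (K t) = 0"
    and t: "t \<in> {A..B}"
  shows "vint (vscale c \<eta>0) (integrated_kernel_dt a K t) + vint (vscale c \<eta>1 @ \<zeta>) (K t) = f t"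
proof -
  have "vint \<zeta> (K t) = vint \<zeta> (\<lambda>s. K s t)"
  proof (rule vint_cong[OF Z])
    fix s assume "s \<in> {A..B}"
    then show "K t s = K s t" using t a_le_A by (intro K_sym) auto
  qed
  also have "\<dots> = f t" by (rule \<zeta>_f[OF t])
  finally have "vint \<zeta> (K t) = f t" .
  moreover have "vint (vscale c \<eta>0) (integrated_kernel_dt a K t) + vint (vscale c \<eta>1 @ \<zeta>) (K t)
      = (sint \<eta>0 (integrated_kernel_dt a K t) + sint \<eta>1 (K t)) *\<^sub>R c + vint \<zeta> (K t)"
    by (simp add: vint_vscale vint_append scaleR_add_left)
  ultimately show ?thesis using deriv by simp
qed

end

theorem theorem3p2:
  fixes a A B :: real
    and K :: "real \<Rightarrow> real \<Rightarrow> real"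
    and f :: "real \<Rightarrow> real^'m::finite"
    and \<zeta>0 :: "'m vmeas"
    and \<eta>0 \<eta>1 :: smeas
  assumes "a \<le> A" and "A < B"
    and "cov_kernel {a..B} K"
    and "continuous_on ({a..B} \<times> {a..B}) (\<lambda>(t, s). K t s)"
    and "continuous_on {a..B} f"
    and "vmeas_on {A..B} \<zeta>0"
    and "\<forall>s\<in>{A..B}. vint \<zeta>0 (\<lambda>t. K t s) = f s"
    and "invertible (fmat f \<zeta>0)"
    and "smeas_on {A..B} \<eta>0" and "smeas_on {A..B} \<eta>1"
  defines "ft \<equiv> (\<lambda>t. integral {a..t} f)"
    and "R \<equiv> (\<lambda>t s. integral {a..t} (\<lambda>u. integral {a..s} (\<lambda>v. K u v)))"
    and "R1 \<equiv> (\<lambda>t s. integral {a..s} (\<lambda>v. K t v))"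
  assumes "\<forall>s\<in>{A..B}. sint \<eta>0 (\<lambda>t. R t s) + sint \<eta>1 (\<lambda>t. R1 t s) = 1"
  defines "c \<equiv> integral {a..A} (\<lambda>s. vint \<zeta>0 (\<lambda>t. K t s) - f s)"
  defines "\<zeta>t0 \<equiv> vscale (- c) \<eta>0"
    and "\<zeta>t1 \<equiv> vscale (- c) \<eta>1 @ \<zeta>0"
  defines "Ct \<equiv> fmat ft \<zeta>t0 + fmat f \<zeta>t1"
  assumes "invertible Ct"
  shows "blue2 {A..B} ft f R R1 K (mmul (matrix_inv Ct) \<zeta>t0) (mmul (matrix_inv Ct) \<zeta>t1)"
proof -
  interpret integrated_model a A B K
    using assms(1-4) by unfold_locales auto
  have R: "R = integrated_kernel a K" and R1: "R1 = integrated_kernel_dt a K"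
    by (simp_all add: fun_eq_iff R_def R1_def integrated_kernel_def integrated_kernel_dt_def)
  note E = assms(9,10) and \<zeta>_f = assms(7)[rule_format] and eta = assms(14)[unfolded R R1, rule_format]
  have deriv: "\<And>t. t \<in> {A..B} \<Longrightarrow> sint \<eta>0 (integrated_kernel_dt a K t) + sint \<eta>1 (K t) = 0"
    by (rule eta_equation_deriv[OF E eta])
  show ?thesis
    unfolding R R1 Ct_def
  proof (rule blue2_of_reproducing)
    show "vmeas_on {A..B} \<zeta>t0" unfolding \<zeta>t0_def by (rule vmeas_on_vscale[OF E(1)])
    show "vmeas_on {A..B} \<zeta>t1"
      unfolding \<zeta>t1_def by (rule vmeas_on_append[OF vmeas_on_vscale[OF E(2)] assms(6)])
    have "continuous_on {a..B} ft"
      unfolding ft_def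
      by (rule indefinite_integral_continuous_1[OF integrable_continuous_interval[OF assms(5)]])
    then show "continuous_on {A..B} ft" by (rule continuous_on_subset) (use a_le_A in auto)
    show "continuous_on {A..B} f" by (rule continuous_on_subset[OF assms(5)]) (use a_le_A in auto)
    show "reproducing \<zeta>t0 \<zeta>t1 ft f"
      unfolding reproducing_def \<zeta>t0_def \<zeta>t1_def ft_def c_def
      using reproducing_integrated_kernel[OF assms(6,5) \<zeta>_f E eta]
        reproducing_integrated_kernel_dt[OF assms(6) \<zeta>_f deriv]
      by blast
    show "invertible (fmat ft \<zeta>t0 + fmat f \<zeta>t1)" using assms(19) unfolding Ct_def .
  qed
qed

end
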